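(* Let $\phi=(\phi_1,\phi_2)^T$, $\psi=(\psi_1,\psi_2)^T$ be an orthonormal vector-valued wavelet basis (scaling function and mother wavelet of a vector-valued multiresolution analysis with dilation $2$) of $L^2(\mathbb{R},\mathbb{R}^2)$. For $k=(k_1,k_2)\in\mathbb{Z}^2$ and $j\in\{0,1,2,\dots\}$ define $\Phi^1_k(x,y)=(\phi_1(x-k_1)\phi_1(y-k_2),\ \phi_2(x-k_1)\phi_2(y-k_2))^T$, $\Phi^2_k(x,y)=(\phi_1(x-k_1)\phi_2(y-k_2),\ \phi_2(x-k_1)\phi_1(y-k_2))^T$, $\Psi^1_{j,k}=(\phi_1(2^jx-k_1)\psi_1(2^jy-k_2),\ \phi_2(2^jx-k_1)\psi_2(2^jy-k_2))^T$, $\Psi^2_{j,k}=(\phi_1(2^jx-k_1)\psi_2(2^jy-k_2),\ \phi_2(2^jx-k_1)\psi_1(2^jy-k_2))^T$, $\Psi^3_{j,k}=(\psi_1(2^jx-k_1)\phi_1(2^jy-k_2),\ \psi_2(2^jx-k_1)\phi_2(2^jy-k_2))^T$, $\Psi^4_{j,k}=(\psi_1(2^jx-k_1)\phi_2(2^jy-k_2),\ \psi_2(2^jx-k_1)\phi_1(2^jy-k_2))^T$, $\Psi^5_{j,k}=(\psi_1(2^jx-k_1)\psi_1(2^jy-k_2),\ \psi_2(2^jx-k_1)\psi_2(2^jy-k_2))^T$, $\Psi^6_{j,k}=(\psi_1(2^jx-k_1)\psi_2(2^jy-k_2),\ \psi_2(2^jx-k_1)\psi_1(2^jy-k_2))^T$.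 Then $\{\Phi^i_k\}_{i\in\{1,2\},k\in\mathbb{Z}^2}\cup\{\Psi^i_{j,k}\}_{i\in\{1,\dots,6\},k\in\mathbb{Z}^2,j\ge0}$ is an orthogonal basis of $L^2(\mathbb{R}^2,\mathbb{R}^2)$.
   Context: $L^2(\mathbb{R}^d,\mathbb{R}^2)$: square-integrable $h=(h_1,h_2)^T$ on $\mathbb{R}^d$; $*$-product $\langle f,g\rangle_*=\int f(x)g(x)^Tdx\in\mathcal{M}_{2\times2}(\mathbb{R})$. A family $\{U_k\}$ is orthogonal if $\langle U_k,U_u\rangle_*=0$ for $k\ne u$ and $\langle U_k,U_k\rangle_*$ is a positive multiple of $I_{2\times2}$; it is a basis if every $f$ has a unique expansion $f=\sum_kQ_kU_k$ with $2\times2$ real matrix coefficients, convergent in $L^2$. A vector-valued multiresolution analysis with scaling function $\phi$ and dilation $2$: closed subspaces $V_j$ with $V_j\subset V_{j+1}$, $\bigcap V_j=\{0\}$, $\bigcup V_j$ dense, $h\in V_j\iff h(2\cdot)\in V_{j+1}$, $h\in V_j\iff h(\cdot-k)\in V_j$, $\{\phi(\cdot-k)\}$ an orthonormal basis of $V_0$; the mother wavelet $\psi$ has $\{\psi(\cdot-k)\}$ an orthonormal basis of $V_1\ominus V_0$, and $\{\phi(\cdot-k)\}\cup\{2^{j/2}\psi(2^j\cdot-k)\}_{j\ge0}$ is an orthonormal basis of $L^2(\mathbb{R},\mathbb{R}^2)$. *)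

theory Defs
  imports "HOL-Analysis.Analysis"
begin

definition vec2 :: "real \<Rightarrow> real \<Rightarrow> real^2" where
  "vec2 a b = (\<chi> i. if i = 1 then a else b)"

definition L2 :: "('a::euclidean_space \<Rightarrow> real^2) set" where
  "L2 = {f. f \<in> borel_measurable lborel \<and> integrable lborel (\<lambda>x. (norm (f x))\<^sup>2)}"

definition L2_norm :: "('a::euclidean_space \<Rightarrow> real^2) \<Rightarrow> real" where
  "L2_norm f = sqrt (LINT x|lborel. (norm (f x))\<^sup>2)"

definition star_prod :: "('a::euclidean_space \<Rightarrow> real^2) \<Rightarrow> ('a \<Rightarrow> real^2) \<Rightarrow> real^2^2" where
  "star_prod f g = (\<chi> i j. LINT x|lborel. f x $ i * g x $ j)"

definition orthogonal_family :: "('i \<Rightarrow> 'a::euclidean_space \<Rightarrow> real^2) \<Rightarrow> 'i set \<Rightarrow> bool" where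
  "orthogonal_family U I \<longleftrightarrow>
     (\<forall>k\<in>I. \<forall>u\<in>I. k \<noteq> u \<longrightarrow> star_prod (U k) (U u) = 0) \<and>
     (\<forall>k\<in>I. \<exists>c>0. star_prod (U k) (U k) = c *\<^sub>R mat 1)"

definition orthonormal_family :: "('i \<Rightarrow> 'a::euclidean_space \<Rightarrow> real^2) \<Rightarrow> 'i set \<Rightarrow> bool" where
  "orthonormal_family U I \<longleftrightarrow>
     (\<forall>k\<in>I. \<forall>u\<in>I. star_prod (U k) (U u) = (if k = u then mat 1 else 0))"

text \<open>f = sum over I of Q_k U_k, convergent (unconditionally, i.e. along the net of finite
  subsets of I) in the L^2 norm.\<close>
definition L2_expansion ::
  "('a::euclidean_space \<Rightarrow> real^2) \<Rightarrow> ('i \<Rightarrow> real^2^2) \<Rightarrow> ('i \<Rightarrow> 'a \<Rightarrow> real^2) \<Rightarrow> 'i set \<Rightarrow> bool" where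
  "L2_expansion f Q U I \<longleftrightarrow>
     (\<forall>e>0. \<exists>F0. finite F0 \<and> F0 \<subseteq> I \<and>
        (\<forall>F. finite F \<and> F0 \<subseteq> F \<and> F \<subseteq> I \<longrightarrow>
           L2_norm (\<lambda>x. f x - (\<Sum>k\<in>F. Q k *v U k x)) < e))"

definition basis_of :: "('a::euclidean_space \<Rightarrow> real^2) set \<Rightarrow> ('i \<Rightarrow> 'a \<Rightarrow> real^2) \<Rightarrow> 'i set \<Rightarrow> bool" where
  "basis_of S U I \<longleftrightarrow> (\<forall>k\<in>I. U k \<in> S) \<and>
     (\<forall>f\<in>S. \<exists>Q. L2_expansion f Q U I \<and>
        (\<forall>Q'. L2_expansion f Q' U I \<longrightarrow> (\<forall>k\<in>I. Q' k = Q k)))"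

definition orthogonal_basis :: "('a::euclidean_space \<Rightarrow> real^2) set \<Rightarrow> ('i \<Rightarrow> 'a \<Rightarrow> real^2) \<Rightarrow> 'i set \<Rightarrow> bool" where
  "orthogonal_basis S U I \<longleftrightarrow> orthogonal_family U I \<and> basis_of S U I"

definition orthonormal_basis :: "('a::euclidean_space \<Rightarrow> real^2) set \<Rightarrow> ('i \<Rightarrow> 'a \<Rightarrow> real^2) \<Rightarrow> 'i set \<Rightarrow> bool" where
  "orthonormal_basis S U I \<longleftrightarrow> orthonormal_family U I \<and> basis_of S U I"

definition closed_L2_subspace :: "(real \<Rightarrow> real^2) set \<Rightarrow> bool" where
  "closed_L2_subspace V \<longleftrightarrow> V \<subseteq> L2 \<and> (\<lambda>x. 0) \<in> V \<and>
     (\<forall>f\<in>V. \<forall>g\<in>V. (\<lambda>x. f x + g x) \<in> V) \<and>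
     (\<forall>c f. f \<in> V \<longrightarrow> (\<lambda>x. c *\<^sub>R f x) \<in> V) \<and>
     (\<forall>h s. (\<forall>n. s n \<in> V) \<and> h \<in> L2 \<and> (\<lambda>n. L2_norm (\<lambda>x. s n x - h x)) \<longlonglongrightarrow> 0 \<longrightarrow> h \<in> V)"

text \<open>Vector-valued MRA with dilation 2 and scaling function phi. Equality with 0 in the
  intersection axiom is in the L^2 sense.\<close>
definition vector_MRA :: "(int \<Rightarrow> (real \<Rightarrow> real^2) set) \<Rightarrow> (real \<Rightarrow> real^2) \<Rightarrow> bool" where
  "vector_MRA V \<phi> \<longleftrightarrow>
     (\<forall>j. closed_L2_subspace (V j)) \<and>
     (\<forall>j. V j \<subseteq> V (j + 1)) \<and>
     (\<forall>h. (\<forall>j. h \<in> V j) \<longrightarrow> L2_norm h = 0) \<and>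
     (\<forall>f\<in>L2. \<forall>e>0. \<exists>j. \<exists>h\<in>V j. L2_norm (\<lambda>x. f x - h x) < e) \<and>
     (\<forall>j h. h \<in> V j \<longleftrightarrow> (\<lambda>x. h (2 * x)) \<in> V (j + 1)) \<and>
     (\<forall>j h (k::int). h \<in> V j \<longleftrightarrow> (\<lambda>x. h (x - of_int k)) \<in> V j) \<and>
     orthonormal_basis (V 0) (\<lambda>(k::int) x. \<phi> (x - of_int k)) UNIV"

definition wavelet_system :: "(real \<Rightarrow> real^2) \<Rightarrow> (real \<Rightarrow> real^2) \<Rightarrow> int + (nat \<times> int) \<Rightarrow> real \<Rightarrow> real^2" where
  "wavelet_system \<phi> \<psi> idx = (case idx of
      Inl k \<Rightarrow> (\<lambda>x. \<phi> (x - of_int k))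
    | Inr (j, k) \<Rightarrow> (\<lambda>x. (sqrt 2) ^ j *\<^sub>R \<psi> (2 ^ j * x - of_int k)))"

definition vector_wavelet :: "(real \<Rightarrow> real^2) \<Rightarrow> (real \<Rightarrow> real^2) \<Rightarrow> bool" where
  "vector_wavelet \<phi> \<psi> \<longleftrightarrow>
     (\<exists>V. vector_MRA V \<phi> \<and>
        orthonormal_basis {h \<in> V 1. \<forall>g\<in>V 0. star_prod h g = 0} (\<lambda>(k::int) x. \<psi> (x - of_int k)) UNIV) \<and>
     orthonormal_basis L2 (wavelet_system \<phi> \<psi>) UNIV"

definition Phi1 :: "(real \<Rightarrow> real^2) \<Rightarrow> int \<times> int \<Rightarrow> real \<times> real \<Rightarrow> real^2" where
  "Phi1 \<phi> k = (\<lambda>(x, y). vec2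
      (\<phi> (x - of_int (fst k)) $ 1 * \<phi> (y - of_int (snd k)) $ 1)
      (\<phi> (x - of_int (fst k)) $ 2 * \<phi> (y - of_int (snd k)) $ 2))"

definition Phi2 :: "(real \<Rightarrow> real^2) \<Rightarrow> int \<times> int \<Rightarrow> real \<times> real \<Rightarrow> real^2" where
  "Phi2 \<phi> k = (\<lambda>(x, y). vec2
      (\<phi> (x - of_int (fst k)) $ 1 * \<phi> (y - of_int (snd k)) $ 2)
      (\<phi> (x - of_int (fst k)) $ 2 * \<phi> (y - of_int (snd k)) $ 1))"

definition tens :: "bool \<Rightarrow> (real \<Rightarrow> real^2) \<Rightarrow> (real \<Rightarrow> real^2) \<Rightarrow> nat \<Rightarrow> int \<times> int \<Rightarrow> real \<times> real \<Rightarrow> real^2" where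
  "tens swap a b j k = (\<lambda>(x, y). vec2
      (a (2 ^ j * x - of_int (fst k)) $ 1 * b (2 ^ j * y - of_int (snd k)) $ (if swap then 2 else 1))
      (a (2 ^ j * x - of_int (fst k)) $ 2 * b (2 ^ j * y - of_int (snd k)) $ (if swap then 1 else 2)))"

definition Psi1 :: "(real \<Rightarrow> real^2) \<Rightarrow> (real \<Rightarrow> real^2) \<Rightarrow> nat \<Rightarrow> int \<times> int \<Rightarrow> real \<times> real \<Rightarrow> real^2" where
  "Psi1 \<phi> \<psi> = tens False \<phi> \<psi>"
definition Psi2 :: "(real \<Rightarrow> real^2) \<Rightarrow> (real \<Rightarrow> real^2) \<Rightarrow> nat \<Rightarrow> int \<times> int \<Rightarrow> real \<times> real \<Rightarrow> real^2" where
  "Psi2 \<phi> \<psi> = tens True \<phi> \<psi>"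
definition Psi3 :: "(real \<Rightarrow> real^2) \<Rightarrow> (real \<Rightarrow> real^2) \<Rightarrow> nat \<Rightarrow> int \<times> int \<Rightarrow> real \<times> real \<Rightarrow> real^2" where
  "Psi3 \<phi> \<psi> = tens False \<psi> \<phi>"
definition Psi4 :: "(real \<Rightarrow> real^2) \<Rightarrow> (real \<Rightarrow> real^2) \<Rightarrow> nat \<Rightarrow> int \<times> int \<Rightarrow> real \<times> real \<Rightarrow> real^2" where
  "Psi4 \<phi> \<psi> = tens True \<psi> \<phi>"
definition Psi5 :: "(real \<Rightarrow> real^2) \<Rightarrow> (real \<Rightarrow> real^2) \<Rightarrow> nat \<Rightarrow> int \<times> int \<Rightarrow> real \<times> real \<Rightarrow> real^2" where
  "Psi5 \<phi> \<psi> = tens False \<psi> \<psi>"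
definition Psi6 :: "(real \<Rightarrow> real^2) \<Rightarrow> (real \<Rightarrow> real^2) \<Rightarrow> nat \<Rightarrow> int \<times> int \<Rightarrow> real \<times> real \<Rightarrow> real^2" where
  "Psi6 \<phi> \<psi> = tens True \<psi> \<psi>"

datatype tidx = PhiIdx nat "int \<times> int" | PsiIdx nat nat "int \<times> int"

definition tensor_index :: "tidx set" where
  "tensor_index = {PhiIdx i k |i k. i \<in> {1, 2}} \<union> {PsiIdx i j k |i j k. i \<in> {1..6}}"

fun tensor_family :: "(real \<Rightarrow> real^2) \<Rightarrow> (real \<Rightarrow> real^2) \<Rightarrow> tidx \<Rightarrow> real \<times> real \<Rightarrow> real^2" where
  "tensor_family \<phi> \<psi> (PhiIdx i k) = (if i = 1 then Phi1 \<phi> k else Phi2 \<phi> k)"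
| "tensor_family \<phi> \<psi> (PsiIdx i j k) =
     (if i = 1 then Psi1 \<phi> \<psi> j k else if i = 2 then Psi2 \<phi> \<psi> j k
      else if i = 3 then Psi3 \<phi> \<psi> j k else if i = 4 then Psi4 \<phi> \<psi> j k
      else if i = 5 then Psi5 \<phi> \<psi> j k else Psi6 \<phi> \<psi> j k)"

end

theory Submission
  imports Defs
begin

text \<open>
  A family U of R^2-valued functions whose two components are c t * E (t, a), with weights
  c t > 0, is an orthogonal basis of L^2 as soon as the scalar functions E (t, a) form an
  orthonormal system satisfying Parseval's identity; conversely, the components of an orthonormal
  vector basis form such a system. Up to the weights 2^-j, the components of the
  two-dimensional functions are tensor products, at one common dyadic level j, of components of
  the one-dimensional scaling functions phi_jk and wavelets psi_jk. By Fubini, the tensor products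
  of all pairs of components of the one-dimensional system satisfy Parseval's identity. Dilating
  by 2^j shows that the phi_jk together with the psi_ik for i >= j form a complete system as
  well, which gives a telescoping identity: the energy of g against the phi_jk is its energy
  against the phi_0k plus its energies against the psi_ik for i < j. Grouping the pairs of levels
  (i, l) by max i l and telescoping turns the Parseval identity of all tensor products into that
  of the equal-level family.
\<close>

section \<open>Square-integrable functions and Bessel's inequality\<close>

definition square_integrable :: "'a measure \<Rightarrow> ('a \<Rightarrow> real) \<Rightarrow> bool" where
  "square_integrable M f \<longleftrightarrow> f \<in> borel_measurable M \<and> integrable M (\<lambda>x. (f x)\<^sup>2)"

definition L2_inner :: "'a measure \<Rightarrow> ('a \<Rightarrow> real) \<Rightarrow> ('a \<Rightarrow> real) \<Rightarrow> real" where
  "L2_inner M f g = (\<integral>x. f x * g x \<partial>M)"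

lemma square_integrable_mult_integrable:
  assumes "square_integrable M f" "square_integrable M g"
  shows "integrable M (\<lambda>x. f x * g x)"
proof (rule Bochner_Integration.integrable_bound)
  show "integrable M (\<lambda>x. (f x)\<^sup>2 + (g x)\<^sup>2)"
    using assms by (simp add: square_integrable_def)
  show "(\<lambda>x. f x * g x) \<in> borel_measurable M"
    using assms by (auto simp: square_integrable_def)
  have "\<bar>f x * g x\<bar> \<le> (f x)\<^sup>2 + (g x)\<^sup>2" for x
  proof -
    have "2 * (\<bar>f x\<bar> * \<bar>g x\<bar>) \<le> (f x)\<^sup>2 + (g x)\<^sup>2"
      using sum_squares_bound[of "\<bar>f x\<bar>" "\<bar>g x\<bar>"] by (simp only: power2_abs mult.assoc)
    then show ?thesis
      unfolding abs_mult using mult_nonneg_nonneg[OF abs_ge_zero abs_ge_zero, of "f x" "g x"] by linarith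
  qed
  then show "AE x in M. norm (f x * g x) \<le> norm ((f x)\<^sup>2 + (g x)\<^sup>2)"
    by simp
qed

lemma square_integrable_zero [simp]: "square_integrable M (\<lambda>x. 0)"
  by (simp add: square_integrable_def)

lemma square_integrable_cmult: "square_integrable M f \<Longrightarrow> square_integrable M (\<lambda>x. c * f x)"
  by (auto simp: square_integrable_def power_mult_distrib)

lemma square_integrable_add:
  assumes "square_integrable M f" "square_integrable M g"
  shows "square_integrable M (\<lambda>x. f x + g x)"
proof -
  have "integrable M (\<lambda>x. (f x)\<^sup>2 + (g x)\<^sup>2 + 2 * (f x * g x))"
    using assms square_integrable_mult_integrable[OF assms] by (simp add: square_integrable_def)
  then show ?thesis
    using assms by (auto simp: square_integrable_def power2_sum mult.assoc)
qed

lemma square_integrable_diff: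
  assumes "square_integrable M f" "square_integrable M g"
  shows "square_integrable M (\<lambda>x. f x - g x)"
  using square_integrable_add[OF assms(1) square_integrable_cmult[OF assms(2), of "-1"]] by simp

lemma square_integrable_sum:
  "finite F \<Longrightarrow> (\<And>i. i \<in> F \<Longrightarrow> square_integrable M (f i)) \<Longrightarrow>
    square_integrable M (\<lambda>x. \<Sum>i\<in>F. f i x)"
  by (induction F rule: finite_induct) (auto intro: square_integrable_add)

lemma L2_inner_commute: "L2_inner M f g = L2_inner M g f"
  by (simp add: L2_inner_def mult.commute)

lemma L2_inner_diff_left:
  "square_integrable M f \<Longrightarrow> square_integrable M g \<Longrightarrow> square_integrable M h \<Longrightarrow>
    L2_inner M (\<lambda>x. f x - g x) h = L2_inner M f h - L2_inner M g h"
  unfolding L2_inner_def by (simp add: left_diff_distrib square_integrable_mult_integrable)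

lemma L2_inner_diff_right:
  "square_integrable M f \<Longrightarrow> square_integrable M g \<Longrightarrow> square_integrable M h \<Longrightarrow>
    L2_inner M h (\<lambda>x. f x - g x) = L2_inner M h f - L2_inner M h g"
  unfolding L2_inner_def by (simp add: right_diff_distrib square_integrable_mult_integrable)

lemma L2_inner_cmult_left: "L2_inner M (\<lambda>x. c * f x) h = c * L2_inner M f h"
  unfolding L2_inner_def by (simp add: mult.assoc)

lemma L2_inner_cmult_right: "L2_inner M h (\<lambda>x. c * f x) = c * L2_inner M h f"
  unfolding L2_inner_def by (simp add: algebra_simps)

lemma L2_inner_sum_left:
  "finite F \<Longrightarrow> (\<And>i. i \<in> F \<Longrightarrow> square_integrable M (f i)) \<Longrightarrow> square_integrable M h \<Longrightarrow>
    L2_inner M (\<lambda>x. \<Sum>i\<in>F. f i x) h = (\<Sum>i\<in>F. L2_inner M (f i) h)"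
  unfolding L2_inner_def by (simp add: sum_distrib_right square_integrable_mult_integrable)

lemma L2_inner_sum_right:
  "finite F \<Longrightarrow> (\<And>i. i \<in> F \<Longrightarrow> square_integrable M (f i)) \<Longrightarrow> square_integrable M h \<Longrightarrow>
    L2_inner M h (\<lambda>x. \<Sum>i\<in>F. f i x) = (\<Sum>i\<in>F. L2_inner M h (f i))"
  unfolding L2_inner_def by (simp add: sum_distrib_left square_integrable_mult_integrable)

lemma L2_inner_self: "L2_inner M f f = (\<integral>x. (f x)\<^sup>2 \<partial>M)"
  by (simp add: L2_inner_def power2_eq_square)

lemma L2_inner_self_nonneg: "L2_inner M f f \<ge> 0"
  by (simp add: L2_inner_self)

lemma L2_inner_self_eq_nn_integral:
  "square_integrable M f \<Longrightarrow> ennreal (L2_inner M f f) = (\<integral>\<^sup>+x. ennreal ((f x)\<^sup>2) \<partial>M)"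
  unfolding L2_inner_self square_integrable_def by (subst nn_integral_eq_integral) auto

lemma L2_inner_Cauchy_Schwarz:
  assumes f: "square_integrable M f" and g: "square_integrable M g"
  shows "(L2_inner M f g)\<^sup>2 \<le> L2_inner M f f * L2_inner M g g"
proof -
  define A B C where "A = L2_inner M f f" "B = L2_inner M f g" "C = L2_inner M g g"
  have quadratic_nonneg: "0 \<le> A - 2 * t * B + t\<^sup>2 * C" for t
  proof -
    have tg: "square_integrable M (\<lambda>x. t * g x)"
      using g by (rule square_integrable_cmult)
    have "0 \<le> L2_inner M (\<lambda>x. f x - t * g x) (\<lambda>x. f x - t * g x)"
      by (rule L2_inner_self_nonneg)
    also have "\<dots> = A - 2 * t * B + t\<^sup>2 * C"
      using f g tg unfolding A_B_C_def
      by (simp add: square_integrable_diff L2_inner_diff_left L2_inner_diff_right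
          L2_inner_cmult_left L2_inner_cmult_right L2_inner_commute[of M g f] power2_eq_square algebra_simps)
    finally show ?thesis .
  qed
  show ?thesis
  proof (cases "C = 0")
    case True
    have "B = 0"
    proof (rule ccontr)
      assume "B \<noteq> 0"
      then have "A - 2 * ((A + 1) / (2 * B)) * B = -1"
        by (simp add: field_simps)
      with quadratic_nonneg[of "(A + 1) / (2 * B)"] True show False
        by simp
    qed
    with True show ?thesis by (simp add: A_B_C_def)
  next
    case False
    then have "C > 0"
      using L2_inner_self_nonneg[of M g] by (simp add: A_B_C_def)
    have "A - 2 * (B / C) * B + (B / C)\<^sup>2 * C = A - B\<^sup>2 / C"
      using \<open>C > 0\<close> by (simp add: field_simps power2_eq_square)
    with quadratic_nonneg[of "B / C"] have "B\<^sup>2 / C \<le> A"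
      by simp
    then show ?thesis
      using \<open>C > 0\<close> by (simp add: A_B_C_def field_simps)
  qed
qed

definition orthonormal_system :: "'a measure \<Rightarrow> ('i \<Rightarrow> 'a \<Rightarrow> real) \<Rightarrow> 'i set \<Rightarrow> bool" where
  "orthonormal_system M e I \<longleftrightarrow> (\<forall>i\<in>I. square_integrable M (e i)) \<and>
     (\<forall>i\<in>I. \<forall>j\<in>I. L2_inner M (e i) (e j) = (if i = j then 1 else 0))"

lemma Bessel_identity:
  assumes e: "orthonormal_system M e I" and F: "finite F" "F \<subseteq> I" and g: "square_integrable M g"
  shows "L2_inner M (\<lambda>x. g x - (\<Sum>i\<in>F. c i * e i x)) (\<lambda>x. g x - (\<Sum>i\<in>F. c i * e i x)) =
    L2_inner M g g - (\<Sum>i\<in>F. (L2_inner M g (e i))\<^sup>2) + (\<Sum>i\<in>F. (c i - L2_inner M g (e i))\<^sup>2)"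
proof -
  have e_F: "square_integrable M (e i)" if "i \<in> F" for i
    using e F that unfolding orthonormal_system_def by auto
  have ce_F: "square_integrable M (\<lambda>x. c i * e i x)" if "i \<in> F" for i
    using e_F[OF that] by (rule square_integrable_cmult)
  define s where "s = (\<lambda>x. \<Sum>i\<in>F. c i * e i x)"
  have s: "square_integrable M s"
    unfolding s_def by (rule square_integrable_sum[OF F(1) ce_F])
  have e_s: "L2_inner M (e i) s = c i" if "i \<in> F" for i
  proof -
    have "L2_inner M (e i) s = (\<Sum>j\<in>F. c j * L2_inner M (e i) (e j))"
      unfolding s_def using F(1) ce_F e_F[OF that]
      by (simp add: L2_inner_sum_right L2_inner_cmult_right)
    also have "\<dots> = (\<Sum>j\<in>F. if j = i then c j else 0)"
      using e that by (intro sum.cong refl) (auto simp: orthonormal_system_def dest!: subsetD[OF F(2)])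
    finally show ?thesis
      using F(1) that by simp
  qed
  have g_s: "L2_inner M g s = (\<Sum>i\<in>F. c i * L2_inner M g (e i))"
    unfolding s_def using F(1) ce_F g by (simp add: L2_inner_sum_right L2_inner_cmult_right)
  have s_s: "L2_inner M s s = (\<Sum>i\<in>F. (c i)\<^sup>2)"
  proof -
    have "L2_inner M s s = (\<Sum>i\<in>F. L2_inner M (\<lambda>x. c i * e i x) s)"
      using L2_inner_sum_left[where f = "\<lambda>i x. c i * e i x", OF F(1) ce_F s]
      by (simp only: s_def[symmetric])
    then show ?thesis
      by (simp add: L2_inner_cmult_left e_s power2_eq_square)
  qed
  have "L2_inner M (\<lambda>x. g x - s x) (\<lambda>x. g x - s x) = L2_inner M g g - 2 * L2_inner M g s + L2_inner M s s"
    using g s square_integrable_diff[OF g s]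
    by (simp add: L2_inner_diff_left L2_inner_diff_right L2_inner_commute[of M s g])
  also have "\<dots> = L2_inner M g g - (\<Sum>i\<in>F. (L2_inner M g (e i))\<^sup>2) + (\<Sum>i\<in>F. (c i - L2_inner M g (e i))\<^sup>2)"
    unfolding g_s s_s
    by (simp add: power2_diff sum.distrib sum_subtractf sum_distrib_left mult.assoc)
  finally show ?thesis
    unfolding s_def .
qed

lemma Bessel_inequality:
  assumes "orthonormal_system M e I" "finite F" "F \<subseteq> I" "square_integrable M g"
  shows "(\<Sum>i\<in>F. (L2_inner M g (e i))\<^sup>2) \<le> L2_inner M g g"
  using Bessel_identity[OF assms, of "\<lambda>i. L2_inner M g (e i)"]
    L2_inner_self_nonneg[of M "\<lambda>x. g x - (\<Sum>i\<in>F. L2_inner M g (e i) * e i x)"]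
  by simp

lemma Bessel_best_approximation:
  assumes "orthonormal_system M e I" "finite F" "F \<subseteq> I" "square_integrable M g"
  shows "L2_inner M g g - (\<Sum>i\<in>F. (L2_inner M g (e i))\<^sup>2) \<le>
     L2_inner M (\<lambda>x. g x - (\<Sum>i\<in>F. c i * e i x)) (\<lambda>x. g x - (\<Sum>i\<in>F. c i * e i x))"
  using Bessel_identity[OF assms, of c] by (simp add: sum_nonneg)

section \<open>Sums over countable index sets and Parseval systems\<close>

lemma sum_le_nn_integral_count_space:
  fixes f :: "'a \<Rightarrow> ennreal"
  assumes "finite F" "F \<subseteq> A"
  shows "(\<Sum>x\<in>F. f x) \<le> (\<integral>\<^sup>+x. f x \<partial>count_space A)"
proof -
  have "(\<Sum>x\<in>F. f x) = (\<integral>\<^sup>+x. f x * indicator F x \<partial>count_space UNIV)"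
    using assms(1) by (simp add: nn_integral_count_space_finite flip: nn_integral_count_space_indicator)
  also have "\<dots> \<le> (\<integral>\<^sup>+x. f x * indicator A x \<partial>count_space UNIV)"
    using assms(2) by (intro nn_integral_mono) (auto split: split_indicator)
  finally show ?thesis
    by (simp add: nn_integral_count_space_indicator)
qed

lemma nn_integral_count_space_SUP:
  fixes f :: "'a \<Rightarrow> ennreal"
  assumes A: "countable A"
  shows "(\<integral>\<^sup>+x. f x \<partial>count_space A) = (SUP F\<in>{F. finite F \<and> F \<subseteq> A}. (\<Sum>x\<in>F. f x))"
proof (rule antisym)
  show "(SUP F\<in>{F. finite F \<and> F \<subseteq> A}. (\<Sum>x\<in>F. f x)) \<le> (\<integral>\<^sup>+x. f x \<partial>count_space A)"
    by (rule SUP_least) (auto intro: sum_le_nn_integral_count_space)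
  show "(\<integral>\<^sup>+x. f x \<partial>count_space A) \<le> (SUP F\<in>{F. finite F \<and> F \<subseteq> A}. (\<Sum>x\<in>F. f x))"
  proof (cases "finite A")
    case True
    then show ?thesis
      by (simp add: nn_integral_count_space_finite) (intro SUP_upper2[of A] order.refl; simp)
  next
    case False
    let ?g = "from_nat_into A"
    have bij: "bij_betw ?g UNIV A"
      using bij_betw_from_nat_into[OF A False] .
    have "(\<integral>\<^sup>+x. f x \<partial>count_space A) = (SUP n. \<Sum>i<n. f (?g i))"
      by (simp add: nn_integral_bij_count_space[symmetric, OF bij] nn_integral_count_space_nat
          suminf_eq_SUP)
    also have "\<dots> \<le> (SUP F\<in>{F. finite F \<and> F \<subseteq> A}. (\<Sum>x\<in>F. f x))"
    proof (rule SUP_least)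
      fix n
      have "inj_on ?g {..<n}"
        using bij unfolding bij_betw_def by (auto intro: inj_on_subset)
      then have "(\<Sum>i<n. f (?g i)) = (\<Sum>x\<in>?g ` {..<n}. f x)"
        by (simp add: sum.reindex)
      also have "\<dots> \<le> (SUP F\<in>{F. finite F \<and> F \<subseteq> A}. (\<Sum>x\<in>F. f x))"
        using bij by (intro SUP_upper) (auto simp: bij_betw_def)
      finally show "(\<Sum>i<n. f (?g i)) \<le> (SUP F\<in>{F. finite F \<and> F \<subseteq> A}. (\<Sum>x\<in>F. f x))" .
    qed
    finally show ?thesis .
  qed
qed

lemma nn_integral_count_space_add:
  fixes f g :: "'a \<Rightarrow> ennreal"
  shows "(\<integral>\<^sup>+x. f x + g x \<partial>count_space A) =
    (\<integral>\<^sup>+x. f x \<partial>count_space A) + (\<integral>\<^sup>+x. g x \<partial>count_space A)"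
  by (rule nn_integral_add) auto

lemma nn_integral_count_space_sum:
  fixes f :: "'i \<Rightarrow> 'a \<Rightarrow> ennreal"
  shows "(\<integral>\<^sup>+x. (\<Sum>i\<in>S. f i x) \<partial>count_space A) = (\<Sum>i\<in>S. (\<integral>\<^sup>+x. f i x \<partial>count_space A))"
  by (rule nn_integral_sum) auto

lemma nn_integral_count_space_swap:
  fixes f :: "'a::countable \<Rightarrow> 'b::countable \<Rightarrow> ennreal"
  shows "(\<integral>\<^sup>+x. (\<integral>\<^sup>+y. f x y \<partial>count_space UNIV) \<partial>count_space UNIV) =
    (\<integral>\<^sup>+y. (\<integral>\<^sup>+x. f x y \<partial>count_space UNIV) \<partial>count_space UNIV)"
  by (rule nn_integral_count_space_nn_integral) auto

lemma nn_integral_count_space_prod: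
  fixes f :: "'a::countable \<times> 'b::countable \<Rightarrow> ennreal"
  shows "(\<integral>\<^sup>+p. f p \<partial>count_space UNIV) =
    (\<integral>\<^sup>+x. (\<integral>\<^sup>+y. f (x, y) \<partial>count_space UNIV) \<partial>count_space UNIV)"
proof -
  interpret S: sigma_finite_measure "count_space (UNIV::'b set)"
    by (rule sigma_finite_measure_count_space)
  have "count_space (UNIV::'a set) \<Otimes>\<^sub>M count_space (UNIV::'b set) = count_space UNIV"
    using pair_measure_countable[of "UNIV::'a set" "UNIV::'b set"] by simp
  with S.nn_integral_fst[of f "count_space UNIV"] show ?thesis
    by simp
qed

lemma nn_integral_count_space_sum_type:
  fixes f :: "'a + 'b \<Rightarrow> ennreal"
  shows "(\<integral>\<^sup>+x. f x \<partial>count_space UNIV) =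
    (\<integral>\<^sup>+x. f (Inl x) \<partial>count_space UNIV) + (\<integral>\<^sup>+x. f (Inr x) \<partial>count_space UNIV)"
proof -
  have "(\<integral>\<^sup>+x. f x \<partial>count_space UNIV) =
      (\<integral>\<^sup>+x. f x * indicator (range Inl) x + f x * indicator (range Inr) x \<partial>count_space UNIV)"
  proof (intro nn_integral_cong)
    fix x :: "'a + 'b"
    show "f x = f x * indicator (range Inl) x + f x * indicator (range Inr) x"
      by (cases x) (auto split: split_indicator)
  qed
  also have "\<dots> = (\<integral>\<^sup>+x. f x \<partial>count_space (range Inl)) + (\<integral>\<^sup>+x. f x \<partial>count_space (range Inr))"
    by (simp add: nn_integral_count_space_add nn_integral_count_space_indicator)
  also have "\<dots> = (\<integral>\<^sup>+x. f (Inl x) \<partial>count_space UNIV) + (\<integral>\<^sup>+x. f (Inr x) \<partial>count_space UNIV)"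
    using nn_integral_bij_count_space[of Inl UNIV "range Inl" f]
      nn_integral_bij_count_space[of Inr UNIV "range Inr" f]
    by (simp add: bij_betw_def)
  finally show ?thesis .
qed

lemma nn_integral_count_space_nat_shift:
  fixes f :: "nat \<Rightarrow> ennreal"
  shows "(\<integral>\<^sup>+i. f i \<partial>count_space UNIV) = (\<Sum>i<j. f i) + (\<integral>\<^sup>+i. f (i + j) \<partial>count_space UNIV)"
proof -
  have "(\<integral>\<^sup>+i. f i \<partial>count_space UNIV) =
      (\<integral>\<^sup>+i. f i * indicator {..<j} i + f i * indicator {j..} i \<partial>count_space UNIV)"
    by (intro nn_integral_cong) (auto split: split_indicator)
  also have "\<dots> = (\<Sum>i<j. f i) + (\<integral>\<^sup>+i. f i \<partial>count_space {j..})"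
    by (simp add: nn_integral_count_space_add nn_integral_count_space_finite
        flip: nn_integral_count_space_indicator)
  also have "(\<integral>\<^sup>+i. f i \<partial>count_space {j..}) = (\<integral>\<^sup>+i. f (i + j) \<partial>count_space UNIV)"
    by (rule nn_integral_bij_count_space[symmetric])
      (rule bij_betw_byWitness[where f' = "\<lambda>i. i - j"]; auto)
  finally show ?thesis .
qed

lemma nn_integral_count_space_nat_diagonal_split:
  fixes f :: "nat \<Rightarrow> nat \<Rightarrow> ennreal"
  shows "(\<integral>\<^sup>+i. (\<integral>\<^sup>+j. f i j \<partial>count_space UNIV) \<partial>count_space UNIV) =
    (\<integral>\<^sup>+j. f j j + (\<Sum>i<j. f i j) + (\<Sum>i<j. f j i) \<partial>count_space UNIV)"
proof -
  have row: "(\<integral>\<^sup>+j. f i j \<partial>count_space UNIV) =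
     f i i + (\<integral>\<^sup>+j. f i j * indicator {i<..} j \<partial>count_space UNIV) + (\<Sum>j<i. f i j)" for i
  proof -
    have "(\<integral>\<^sup>+j. f i j \<partial>count_space UNIV) = (\<integral>\<^sup>+j. f i j * indicator {i} j +
        f i j * indicator {i<..} j + f i j * indicator {..<i} j \<partial>count_space UNIV)"
      by (intro nn_integral_cong) (auto split: split_indicator)
    then show ?thesis
      by (simp add: nn_integral_count_space_add nn_integral_count_space_finite
          flip: nn_integral_count_space_indicator)
  qed
  have upper: "(\<integral>\<^sup>+i. (\<integral>\<^sup>+j. f i j * indicator {i<..} j \<partial>count_space UNIV) \<partial>count_space UNIV) =
      (\<integral>\<^sup>+j. (\<Sum>i<j. f i j) \<partial>count_space UNIV)"
  proof -
    have "(\<integral>\<^sup>+i. f i j * indicator {i<..} j \<partial>count_space UNIV) = (\<Sum>i<j. f i j)" for j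
      by (subst nn_integral_count_space'[of "{..<j}"]) (auto split: split_indicator intro!: sum.cong)
    then show ?thesis
      by (subst nn_integral_count_space_swap) simp
  qed
  show ?thesis
    unfolding row nn_integral_count_space_add upper by (simp add: add_ac)
qed

text \<open>The sum over \<open>I\<close> is the integral against counting measure in \<open>ennreal\<close>, so it needs no
  convergence hypothesis.\<close>

definition parseval_system :: "'a measure \<Rightarrow> ('i \<Rightarrow> 'a \<Rightarrow> real) \<Rightarrow> 'i set \<Rightarrow> bool" where
  "parseval_system M e I \<longleftrightarrow> countable I \<and> orthonormal_system M e I \<and>
     (\<forall>g. square_integrable M g \<longrightarrow>
        (\<integral>\<^sup>+i. ennreal ((L2_inner M g (e i))\<^sup>2) \<partial>count_space I) = ennreal (L2_inner M g g))"

lemma parseval_system_square_integrable: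
  "parseval_system M e I \<Longrightarrow> i \<in> I \<Longrightarrow> square_integrable M (e i)"
  by (simp add: parseval_system_def orthonormal_system_def)

lemma parseval_system_Parseval:
  "parseval_system M e I \<Longrightarrow> square_integrable M g \<Longrightarrow>
    (\<integral>\<^sup>+i. ennreal ((L2_inner M g (e i))\<^sup>2) \<partial>count_space I) = ennreal (L2_inner M g g)"
  by (simp add: parseval_system_def)

lemma nn_integral_Bessel_inequality:
  assumes I: "countable I" and e: "orthonormal_system M e I" and g: "square_integrable M g"
  shows "(\<integral>\<^sup>+i. ennreal ((L2_inner M g (e i))\<^sup>2) \<partial>count_space I) \<le> ennreal (L2_inner M g g)"
  unfolding nn_integral_count_space_SUP[OF I]
proof (rule SUP_least, clarify)
  fix F assume "finite F" "F \<subseteq> I"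
  then show "(\<Sum>i\<in>F. ennreal ((L2_inner M g (e i))\<^sup>2)) \<le> ennreal (L2_inner M g g)"
    using Bessel_inequality[OF e _ _ g] by (simp add: ennreal_leI)
qed

lemma Parseval_identity_from_approximation:
  assumes I: "countable I" and e: "orthonormal_system M e I" and g: "square_integrable M g"
    and approx: "\<And>\<epsilon>. \<epsilon> > 0 \<Longrightarrow>
      \<exists>F. finite F \<and> F \<subseteq> I \<and> L2_inner M g g - \<epsilon> < (\<Sum>i\<in>F. (L2_inner M g (e i))\<^sup>2)"
  shows "(\<integral>\<^sup>+i. ennreal ((L2_inner M g (e i))\<^sup>2) \<partial>count_space I) = ennreal (L2_inner M g g)"
proof (rule antisym)
  show "(\<integral>\<^sup>+i. ennreal ((L2_inner M g (e i))\<^sup>2) \<partial>count_space I) \<le> ennreal (L2_inner M g g)"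
    by (rule nn_integral_Bessel_inequality[OF I e g])
  show "ennreal (L2_inner M g g) \<le> (\<integral>\<^sup>+i. ennreal ((L2_inner M g (e i))\<^sup>2) \<partial>count_space I)"
  proof (rule ennreal_le_epsilon)
    fix \<epsilon> :: real assume "0 < \<epsilon>"
    with approx obtain F where F: "finite F" "F \<subseteq> I"
      and less: "L2_inner M g g - \<epsilon> < (\<Sum>i\<in>F. (L2_inner M g (e i))\<^sup>2)"
      by blast
    have "ennreal (L2_inner M g g) \<le> ennreal ((\<Sum>i\<in>F. (L2_inner M g (e i))\<^sup>2) + \<epsilon>)"
      using less by (intro ennreal_leI) simp
    also have "\<dots> = (\<Sum>i\<in>F. ennreal ((L2_inner M g (e i))\<^sup>2)) + ennreal \<epsilon>"
      using \<open>0 < \<epsilon>\<close> by (simp add: sum_nonneg)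
    also have "\<dots> \<le> (\<integral>\<^sup>+i. ennreal ((L2_inner M g (e i))\<^sup>2) \<partial>count_space I) + ennreal \<epsilon>"
      by (intro add_mono sum_le_nn_integral_count_space F order.refl)
    finally show "ennreal (L2_inner M g g) \<le>
        (\<integral>\<^sup>+i. ennreal ((L2_inner M g (e i))\<^sup>2) \<partial>count_space I) + ennreal \<epsilon>" .
  qed
qed

lemma parseval_system_approximation:
  assumes e: "parseval_system M e I" and g: "square_integrable M g" and "\<delta> > 0"
  obtains F where "finite F" "F \<subseteq> I" "L2_inner M g g - \<delta> < (\<Sum>i\<in>F. (L2_inner M g (e i))\<^sup>2)"
proof (cases "L2_inner M g g - \<delta> < 0")
  case True
  then show ?thesis
    by (intro that[of "{}"]) auto
next
  case False
  have I: "countable I"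
    using e by (simp add: parseval_system_def)
  have "ennreal (L2_inner M g g - \<delta>) < ennreal (L2_inner M g g)"
    using False \<open>\<delta> > 0\<close> by (intro ennreal_lessI) auto
  also have "\<dots> = (\<integral>\<^sup>+i. ennreal ((L2_inner M g (e i))\<^sup>2) \<partial>count_space I)"
    using e g by (simp add: parseval_system_def)
  also have "\<dots> = (SUP F\<in>{F. finite F \<and> F \<subseteq> I}. (\<Sum>i\<in>F. ennreal ((L2_inner M g (e i))\<^sup>2)))"
    by (rule nn_integral_count_space_SUP[OF I])
  finally obtain F where F: "finite F" "F \<subseteq> I"
    and "ennreal (L2_inner M g g - \<delta>) < ennreal (\<Sum>i\<in>F. (L2_inner M g (e i))\<^sup>2)"
    by (auto simp: less_SUP_iff)
  then have "L2_inner M g g - \<delta> < (\<Sum>i\<in>F. (L2_inner M g (e i))\<^sup>2)"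
    using False by (simp add: ennreal_less_iff)
  with F show ?thesis
    by (rule that)
qed

lemma parseval_system_reindex:
  assumes s: "bij_betw s A B" and e: "parseval_system M e B"
  shows "parseval_system M (\<lambda>a. e (s a)) A"
  unfolding parseval_system_def orthonormal_system_def
proof (intro conjI ballI allI impI)
  have inj: "inj_on s A" and image: "s ` A = B"
    using s by (auto simp: bij_betw_def)
  show "countable A"
    using e image inj by (auto simp: parseval_system_def intro: countable_image_inj_on)
  show "square_integrable M (e (s a))" if "a \<in> A" for a
    using e that image by (auto simp: parseval_system_def orthonormal_system_def)
  show "L2_inner M (e (s a)) (e (s b)) = (if a = b then 1 else 0)" if "a \<in> A" "b \<in> A" for a b
    using e that image inj_onD[OF inj] by (auto simp: parseval_system_def orthonormal_system_def)
  show "(\<integral>\<^sup>+a. ennreal ((L2_inner M g (e (s a)))\<^sup>2) \<partial>count_space A) = ennreal (L2_inner M g g)"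
    if "square_integrable M g" for g
    using e that nn_integral_bij_count_space[OF s, of "\<lambda>b. ennreal ((L2_inner M g (e b))\<^sup>2)"]
    by (simp add: parseval_system_def)
qed

section \<open>Tensor products on the plane\<close>

definition tensor :: "(real \<Rightarrow> real) \<Rightarrow> (real \<Rightarrow> real) \<Rightarrow> real \<times> real \<Rightarrow> real" where
  "tensor u v = (\<lambda>(x, y). u x * v y)"

lemma tensor_apply [simp]: "tensor u v (x, y) = u x * v y"
  by (simp add: tensor_def)

lemma measurable_tensor [measurable]:
  assumes [measurable]: "u \<in> borel_measurable lborel" "v \<in> borel_measurable lborel"
  shows "tensor u v \<in> borel_measurable (lborel \<Otimes>\<^sub>M lborel)"
  unfolding tensor_def by measurable

lemma integrable_tensor:
  fixes f g :: "real \<Rightarrow> real"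
  assumes f: "integrable lborel f" and g: "integrable lborel g"
  shows "integrable (lborel \<Otimes>\<^sub>M lborel) (\<lambda>(x, y). f x * g y)"
proof -
  have [measurable]: "f \<in> borel_measurable lborel" "g \<in> borel_measurable lborel"
    using f g by auto
  have "(\<integral>\<^sup>+p. ennreal (norm (case p of (x, y) \<Rightarrow> f x * g y)) \<partial>(lborel \<Otimes>\<^sub>M lborel)) =
      (\<integral>\<^sup>+x. ennreal (norm (f x)) \<partial>lborel) * (\<integral>\<^sup>+y. ennreal (norm (g y)) \<partial>lborel)"
    by (subst lborel.nn_integral_fst[symmetric])
      (auto simp: abs_mult ennreal_mult nn_integral_cmult nn_integral_multc)
  also have "\<dots> < \<infinity>"
    using f g unfolding integrable_iff_bounded by (simp add: ennreal_mult_less_top)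
  finally show ?thesis
    by (simp add: integrable_iff_bounded)
qed

lemma square_integrable_tensor:
  assumes "square_integrable lborel u" "square_integrable lborel v"
  shows "square_integrable (lborel \<Otimes>\<^sub>M lborel) (tensor u v)"
proof -
  have [measurable]: "u \<in> borel_measurable lborel" "v \<in> borel_measurable lborel"
    using assms by (auto simp: square_integrable_def)
  have "integrable (lborel \<Otimes>\<^sub>M lborel) (\<lambda>(x, y). (u x)\<^sup>2 * (v y)\<^sup>2)"
    using assms by (intro integrable_tensor) (auto simp: square_integrable_def)
  then show ?thesis
    by (simp add: square_integrable_def tensor_def case_prod_beta' power_mult_distrib)
qed

lemma L2_inner_tensor:
  assumes "square_integrable lborel u" "square_integrable lborel v"
    and "square_integrable lborel u'" "square_integrable lborel v'"
  shows "L2_inner (lborel \<Otimes>\<^sub>M lborel) (tensor u v) (tensor u' v') =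
    L2_inner lborel u u' * L2_inner lborel v v'"
proof -
  have "integrable (lborel \<Otimes>\<^sub>M lborel) (\<lambda>(x, y). (u x * u' x) * (v y * v' y))"
    using assms by (intro integrable_tensor square_integrable_mult_integrable)
  then have "L2_inner (lborel \<Otimes>\<^sub>M lborel) (tensor u v) (tensor u' v') =
      (\<integral>x. (\<integral>y. (u x * u' x) * (v y * v' y) \<partial>lborel) \<partial>lborel)"
    unfolding L2_inner_def by (subst lborel_pair.integral_fst'[symmetric])
      (auto simp: tensor_def case_prod_beta' mult_ac)
  then show ?thesis
    by (simp add: L2_inner_def)
qed

definition contract_snd :: "(real \<times> real \<Rightarrow> real) \<Rightarrow> (real \<Rightarrow> real) \<Rightarrow> real \<Rightarrow> real" where
  "contract_snd h b x = (\<integral>y. h (x, y) * b y \<partial>lborel)"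

definition contract_fst :: "(real \<times> real \<Rightarrow> real) \<Rightarrow> (real \<Rightarrow> real) \<Rightarrow> real \<Rightarrow> real" where
  "contract_fst h a y = (\<integral>x. h (x, y) * a x \<partial>lborel)"

lemma contract_fst_eq_contract_snd_swap: "contract_fst h = contract_snd (\<lambda>(y, x). h (x, y))"
  by (simp add: fun_eq_iff contract_fst_def contract_snd_def)

lemma square_integrable_swap:
  assumes "square_integrable (lborel \<Otimes>\<^sub>M lborel) h"
  shows "square_integrable (lborel \<Otimes>\<^sub>M lborel) (\<lambda>(y, x). h (x, y))"
proof -
  have [measurable]: "h \<in> borel_measurable (lborel \<Otimes>\<^sub>M lborel)"
    using assms by (simp add: square_integrable_def)
  have "integrable (lborel \<Otimes>\<^sub>M lborel) (\<lambda>(y, x). (h (x, y))\<^sup>2)"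
    using lborel_pair.integrable_product_swap[of "\<lambda>p. (h p)\<^sup>2"] assms
    by (simp add: square_integrable_def)
  then show ?thesis
    by (simp add: square_integrable_def case_prod_beta')
qed

lemma L2_inner_tensor_swap:
  assumes "square_integrable (lborel \<Otimes>\<^sub>M lborel) h"
    and "square_integrable lborel a" "square_integrable lborel b"
  shows "L2_inner (lborel \<Otimes>\<^sub>M lborel) h (tensor a b) =
    L2_inner (lborel \<Otimes>\<^sub>M lborel) (\<lambda>(y, x). h (x, y)) (tensor b a)"
proof -
  have [measurable]: "h \<in> borel_measurable (lborel \<Otimes>\<^sub>M lborel)"
    "a \<in> borel_measurable lborel" "b \<in> borel_measurable lborel"
    using assms by (auto simp: square_integrable_def)
  have "L2_inner (lborel \<Otimes>\<^sub>M lborel) (\<lambda>(y, x). h (x, y)) (tensor b a) =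
      (\<integral>(x, y). h (y, x) * tensor a b (y, x) \<partial>(lborel \<Otimes>\<^sub>M lborel))"
    unfolding L2_inner_def
    by (intro Bochner_Integration.integral_cong) (auto simp: tensor_def case_prod_beta mult_ac)
  also have "\<dots> = L2_inner (lborel \<Otimes>\<^sub>M lborel) h (tensor a b)"
    unfolding L2_inner_def by (rule lborel_pair.integral_product_swap) measurable
  finally show ?thesis ..
qed

lemma L2_inner_tensor_contract_snd:
  assumes h: "square_integrable (lborel \<Otimes>\<^sub>M lborel) h"
    and a: "square_integrable lborel a" and b: "square_integrable lborel b"
  shows "L2_inner (lborel \<Otimes>\<^sub>M lborel) h (tensor a b) = L2_inner lborel (contract_snd h b) a"
proof -
  have "integrable (lborel \<Otimes>\<^sub>M lborel) (\<lambda>p. h p * tensor a b p)"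
    by (rule square_integrable_mult_integrable[OF h square_integrable_tensor[OF a b]])
  then have "integrable (lborel \<Otimes>\<^sub>M lborel) (\<lambda>(x, y). h (x, y) * (a x * b y))"
    by (simp add: tensor_def case_prod_beta')
  from lborel_pair.integral_fst'[OF this] show ?thesis
    unfolding L2_inner_def contract_snd_def
    by (simp add: tensor_def case_prod_beta' mult_ac flip: integral_mult_left_zero)
qed

lemma L2_inner_tensor_contract_fst:
  assumes h: "square_integrable (lborel \<Otimes>\<^sub>M lborel) h"
    and a: "square_integrable lborel a" and b: "square_integrable lborel b"
  shows "L2_inner (lborel \<Otimes>\<^sub>M lborel) h (tensor a b) = L2_inner lborel (contract_fst h a) b"
  unfolding L2_inner_tensor_swap[OF h a b] contract_fst_eq_contract_snd_swap
  by (rule L2_inner_tensor_contract_snd[OF square_integrable_swap[OF h] b a])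

lemma square_integrable_contract_snd:
  assumes h: "square_integrable (lborel \<Otimes>\<^sub>M lborel) h" and b: "square_integrable lborel b"
  shows "square_integrable lborel (contract_snd h b)"
proof -
  have [measurable]: "h \<in> borel_measurable (lborel \<Otimes>\<^sub>M lborel)" "b \<in> borel_measurable lborel"
    using h b by (auto simp: square_integrable_def)
  have measurable [measurable]: "contract_snd h b \<in> borel_measurable lborel"
    unfolding contract_snd_def by measurable
  have h2: "integrable (lborel \<Otimes>\<^sub>M lborel) (\<lambda>p. (h p)\<^sup>2)"
    using h by (simp add: square_integrable_def)
  have "integrable lborel (\<lambda>x. (contract_snd h b x)\<^sup>2)"
  proof (rule Bochner_Integration.integrable_bound)
    show "integrable lborel (\<lambda>x. (\<integral>y. (h (x, y))\<^sup>2 \<partial>lborel) * L2_inner lborel b b)"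
      using lborel_pair.integrable_fst'[OF h2] by simp
    show "AE x in lborel. norm ((contract_snd h b x)\<^sup>2) \<le>
        norm ((\<integral>y. (h (x, y))\<^sup>2 \<partial>lborel) * L2_inner lborel b b)"
      using lborel_pair.AE_integrable_fst'[OF h2]
    proof eventually_elim
      case (elim x)
      then have "square_integrable lborel (\<lambda>y. h (x, y))"
        by (simp add: square_integrable_def)
      from L2_inner_Cauchy_Schwarz[OF this b]
      have "(contract_snd h b x)\<^sup>2 \<le> (\<integral>y. (h (x, y))\<^sup>2 \<partial>lborel) * L2_inner lborel b b"
        by (simp add: contract_snd_def L2_inner_def power2_eq_square)
      then show ?case
        using L2_inner_self_nonneg[of lborel b] L2_inner_self_nonneg[of lborel "\<lambda>y. h (x, y)"]
        by (simp add: L2_inner_self)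
    qed
  qed measurable
  then show ?thesis
    by (simp add: square_integrable_def)
qed

lemma square_integrable_contract_fst:
  "square_integrable (lborel \<Otimes>\<^sub>M lborel) h \<Longrightarrow> square_integrable lborel a \<Longrightarrow>
    square_integrable lborel (contract_fst h a)"
  unfolding contract_fst_eq_contract_snd_swap
  by (rule square_integrable_contract_snd[OF square_integrable_swap])

lemma nn_integral_Parseval_slices:
  assumes f: "parseval_system lborel f J" and h: "square_integrable (lborel \<Otimes>\<^sub>M lborel) h"
  shows "(\<integral>\<^sup>+x. (\<integral>\<^sup>+j. ennreal ((contract_snd h (f j) x)\<^sup>2) \<partial>count_space J) \<partial>lborel) =
    ennreal (L2_inner (lborel \<Otimes>\<^sub>M lborel) h h)"
proof -
  have [measurable]: "h \<in> borel_measurable (lborel \<Otimes>\<^sub>M lborel)"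
    and h2: "integrable (lborel \<Otimes>\<^sub>M lborel) (\<lambda>p. (h p)\<^sup>2)"
    using h by (simp_all add: square_integrable_def)
  have "(\<integral>\<^sup>+x. (\<integral>\<^sup>+j. ennreal ((contract_snd h (f j) x)\<^sup>2) \<partial>count_space J) \<partial>lborel) =
      (\<integral>\<^sup>+x. (\<integral>\<^sup>+y. ennreal ((h (x, y))\<^sup>2) \<partial>lborel) \<partial>lborel)"
  proof (rule nn_integral_cong_AE)
    from lborel_pair.AE_integrable_fst'[OF h2]
    show "AE x in lborel. (\<integral>\<^sup>+j. ennreal ((contract_snd h (f j) x)\<^sup>2) \<partial>count_space J) =
        (\<integral>\<^sup>+y. ennreal ((h (x, y))\<^sup>2) \<partial>lborel)"
    proof eventually_elim
      case (elim x)
      then have "square_integrable lborel (\<lambda>y. h (x, y))"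
        by (simp add: square_integrable_def)
      then show ?case
        using parseval_system_Parseval[OF f] L2_inner_self_eq_nn_integral
        by (simp add: contract_snd_def L2_inner_def)
    qed
  qed
  also have "\<dots> = ennreal (L2_inner (lborel \<Otimes>\<^sub>M lborel) h h)"
    unfolding L2_inner_self_eq_nn_integral[OF h]
    by (rule lborel.nn_integral_fst[of "\<lambda>p. ennreal ((h p)\<^sup>2)", simplified]) measurable
  finally show ?thesis .
qed

lemma tensor_Parseval_identity:
  assumes e: "parseval_system lborel e I" and f: "parseval_system lborel f J"
    and h: "square_integrable (lborel \<Otimes>\<^sub>M lborel) h"
  shows "(\<integral>\<^sup>+j. (\<integral>\<^sup>+i. ennreal ((L2_inner (lborel \<Otimes>\<^sub>M lborel) h (tensor (e i) (f j)))\<^sup>2)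
      \<partial>count_space I) \<partial>count_space J) = ennreal (L2_inner (lborel \<Otimes>\<^sub>M lborel) h h)"
proof -
  have contract: "square_integrable lborel (contract_snd h (f j))" if "j \<in> J" for j
    using square_integrable_contract_snd[OF h parseval_system_square_integrable[OF f that]] .
  have "(\<integral>\<^sup>+i. ennreal ((L2_inner (lborel \<Otimes>\<^sub>M lborel) h (tensor (e i) (f j)))\<^sup>2) \<partial>count_space I) =
      (\<integral>\<^sup>+x. ennreal ((contract_snd h (f j) x)\<^sup>2) \<partial>lborel)" if j: "j \<in> J" for j
  proof -
    have "(\<integral>\<^sup>+i. ennreal ((L2_inner (lborel \<Otimes>\<^sub>M lborel) h (tensor (e i) (f j)))\<^sup>2) \<partial>count_space I) =
        (\<integral>\<^sup>+i. ennreal ((L2_inner lborel (contract_snd h (f j)) (e i))\<^sup>2) \<partial>count_space I)"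
      using parseval_system_square_integrable[OF e] parseval_system_square_integrable[OF f j]
      by (intro nn_integral_cong) (simp add: L2_inner_tensor_contract_snd[OF h])
    then show ?thesis
      by (simp add: parseval_system_Parseval[OF e contract[OF j]]
          L2_inner_self_eq_nn_integral[OF contract[OF j]])
  qed
  then have "(\<integral>\<^sup>+j. (\<integral>\<^sup>+i. ennreal ((L2_inner (lborel \<Otimes>\<^sub>M lborel) h (tensor (e i) (f j)))\<^sup>2)
      \<partial>count_space I) \<partial>count_space J) =
      (\<integral>\<^sup>+j. (\<integral>\<^sup>+x. ennreal ((contract_snd h (f j) x)\<^sup>2) \<partial>lborel) \<partial>count_space J)"
    by (simp cong: nn_integral_cong_simp)
  also have "\<dots> = (\<integral>\<^sup>+x. (\<integral>\<^sup>+j. ennreal ((contract_snd h (f j) x)\<^sup>2) \<partial>count_space J) \<partial>lborel)"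
  proof (rule nn_integral_count_space_nn_integral[symmetric])
    show "countable J"
      using f by (simp add: parseval_system_def)
    fix j assume "j \<in> J"
    then have "contract_snd h (f j) \<in> borel_measurable lborel"
      using contract by (simp add: square_integrable_def)
    then show "(\<lambda>x. ennreal ((contract_snd h (f j) x)\<^sup>2)) \<in> borel_measurable lborel"
      by measurable
  qed
  also have "\<dots> = ennreal (L2_inner (lborel \<Otimes>\<^sub>M lborel) h h)"
    by (rule nn_integral_Parseval_slices[OF f h])
  finally show ?thesis .
qed

section \<open>Vector-valued functions and their scalar components\<close>

lemma measurable_vec_nth [measurable]:
  "f \<in> borel_measurable M \<Longrightarrow> (\<lambda>x. (f x :: real^2) $ i) \<in> borel_measurable M"
proof -
  assume [measurable]: "f \<in> borel_measurable M"
  have "(\<lambda>x. f x $ i) = (\<lambda>x. f x \<bullet> axis i 1)"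
    by (simp add: inner_axis)
  then show ?thesis
    by simp
qed

lemma vec2_nth [simp]: "vec2 a b $ 1 = a" "vec2 a b $ 2 = b"
  by (auto simp: vec2_def)

lemma vec2_eq_axis: "vec2 a b = a *\<^sub>R axis 1 1 + b *\<^sub>R axis 2 1"
  unfolding vec2_def by (auto simp: vec_eq_iff axis_def forall_2)

lemma norm_vec2_squared: "(norm (v::real^2))\<^sup>2 = (v $ 1)\<^sup>2 + (v $ 2)\<^sup>2"
  unfolding norm_vec_def L2_set_def by (simp add: sum_2 sum_nonneg)

lemma L2_component:
  assumes "f \<in> L2"
  shows "square_integrable lborel (\<lambda>x. f x $ i)"
proof -
  have [measurable]: "f \<in> borel_measurable lborel"
    and integrable: "integrable lborel (\<lambda>x. (norm (f x))\<^sup>2)"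
    using assms by (auto simp: L2_def)
  have "(f x $ i)\<^sup>2 \<le> (norm (f x))\<^sup>2" for x
    using exhaust_2[of i] by (auto simp: norm_vec2_squared)
  then have "integrable lborel (\<lambda>x. (f x $ i)\<^sup>2)"
    by (intro Bochner_Integration.integrable_bound[OF integrable]) auto
  then show ?thesis
    by (simp add: square_integrable_def)
qed

lemma L2_of_components:
  assumes "square_integrable lborel (\<lambda>x. f x $ 1)" "square_integrable lborel (\<lambda>x. f x $ 2)"
  shows "f \<in> L2"
proof -
  have "(\<lambda>x. vec2 (f x $ 1) (f x $ 2)) \<in> borel_measurable lborel"
    using assms unfolding vec2_eq_axis by (auto simp: square_integrable_def)
  moreover have "vec2 (f x $ 1) (f x $ 2) = f x" for x
    by (auto simp: vec2_def vec_eq_iff forall_2)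
  moreover have "integrable lborel (\<lambda>x. (f x $ 1)\<^sup>2 + (f x $ 2)\<^sup>2)"
    using assms by (auto simp: square_integrable_def)
  ultimately show ?thesis
    by (simp add: L2_def norm_vec2_squared)
qed

lemma L2_diff: "f \<in> L2 \<Longrightarrow> g \<in> L2 \<Longrightarrow> (\<lambda>x. f x - g x) \<in> L2"
  by (intro L2_of_components) (auto intro: square_integrable_diff L2_component)

lemma L2_norm_squared:
  assumes "f \<in> L2"
  shows "(L2_norm f)\<^sup>2 =
    L2_inner lborel (\<lambda>x. f x $ 1) (\<lambda>x. f x $ 1) + L2_inner lborel (\<lambda>x. f x $ 2) (\<lambda>x. f x $ 2)"
proof -
  have "(LINT x|lborel. (norm (f x))\<^sup>2) =
      L2_inner lborel (\<lambda>x. f x $ 1) (\<lambda>x. f x $ 1) + L2_inner lborel (\<lambda>x. f x $ 2) (\<lambda>x. f x $ 2)"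
    using L2_component[OF assms, of 1] L2_component[OF assms, of 2]
    by (simp add: norm_vec2_squared L2_inner_self square_integrable_def)
  then show ?thesis
    using L2_inner_self_nonneg[of lborel "\<lambda>x. f x $ 1"] L2_inner_self_nonneg[of lborel "\<lambda>x. f x $ 2"]
    by (simp add: L2_norm_def)
qed

lemma L2_inner_component_le_L2_norm:
  assumes "f \<in> L2"
  shows "L2_inner lborel (\<lambda>x. f x $ i) (\<lambda>x. f x $ i) \<le> (L2_norm f)\<^sup>2"
  using exhaust_2[of i] L2_inner_self_nonneg[of lborel "\<lambda>x. f x $ 1"]
    L2_inner_self_nonneg[of lborel "\<lambda>x. f x $ 2"]
  by (auto simp: L2_norm_squared[OF assms])

lemma L2_norm_less_iff_squared: "L2_norm f < \<epsilon> \<longleftrightarrow> (L2_norm f)\<^sup>2 < \<epsilon>\<^sup>2" if "\<epsilon> > 0"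
proof -
  have "L2_norm f \<ge> 0"
    by (simp add: L2_norm_def)
  with that show ?thesis
    by (auto intro: power_strict_mono power2_less_imp_less)
qed

text \<open>Components of \<open>real^2\<close> are indexed by \<open>bool\<close>, so that passing to the other component is
  negation.\<close>

definition coord :: "bool \<Rightarrow> 2" where
  "coord a = (if a then 1 else 2)"

lemma coord_eq_iff [simp]: "coord a = coord b \<longleftrightarrow> a = b"
  by (auto simp: coord_def)

lemma coord_of_eq_1 [simp]: "coord (i = 1) = i"
  using exhaust_2[of i] by (auto simp: coord_def)

lemma vec2_nth_coord: "vec2 p q $ coord a = (if a then p else q)"
  by (simp add: coord_def)

lemma star_prod_nth: "star_prod f g $ i $ j = L2_inner lborel (\<lambda>x. f x $ i) (\<lambda>x. g x $ j)"
  by (simp add: star_prod_def L2_inner_def)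

lemma mat_1_nth: "(mat 1 :: real^2^2) $ i $ j = (if i = j then 1 else 0)"
  by (simp add: mat_def)

lemma sum_UNIV_2_coord: "(\<Sum>j\<in>(UNIV::2 set). h j) = (\<Sum>a\<in>UNIV. h (coord a))"
  by (simp add: sum_2 UNIV_bool coord_def add.commute)

lemma matrix_sum_nth:
  "(\<Sum>k\<in>F. Q k *v U k x) $ i =
    (\<Sum>p\<in>F \<times> UNIV. Q (fst p) $ i $ coord (snd p) * U (fst p) x $ coord (snd p))"
proof -
  have "(\<Sum>k\<in>F. Q k *v U k x) $ i = (\<Sum>k\<in>F. \<Sum>a\<in>UNIV. Q k $ i $ coord a * U k x $ coord a)"
    by (simp add: matrix_vector_mult_def sum_UNIV_2_coord)
  then show ?thesis
    by (simp add: sum.cartesian_product case_prod_beta)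
qed

lemma L2_matrix_sum:
  assumes "finite F" "\<And>k. k \<in> F \<Longrightarrow> U k \<in> L2"
  shows "(\<lambda>x. \<Sum>k\<in>F. Q k *v U k x) \<in> L2"
proof -
  have "square_integrable lborel (\<lambda>x. (\<Sum>k\<in>F. Q k *v U k x) $ i)" for i
    unfolding matrix_sum_nth using assms
    by (intro square_integrable_sum square_integrable_cmult L2_component) auto
  then show ?thesis
    by (intro L2_of_components)
qed

lemma orthonormal_system_components:
  assumes U: "orthonormal_family U I" and L2: "\<And>k. k \<in> I \<Longrightarrow> U k \<in> L2"
  shows "orthonormal_system lborel (\<lambda>p x. U (fst p) x $ coord (snd p)) (I \<times> UNIV)"
  unfolding orthonormal_system_def
proof (intro conjI ballI)
  fix p q assume "p \<in> I \<times> (UNIV :: bool set)" "q \<in> I \<times> (UNIV :: bool set)"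
  then show "L2_inner lborel (\<lambda>x. U (fst p) x $ coord (snd p)) (\<lambda>x. U (fst q) x $ coord (snd q)) =
      (if p = q then 1 else 0)"
    using U unfolding star_prod_nth[symmetric] orthonormal_family_def
    by (cases "fst p = fst q") (auto simp: mat_1_nth prod_eq_iff)
next
  fix p assume "p \<in> I \<times> (UNIV :: bool set)"
  then show "square_integrable lborel (\<lambda>x. U (fst p) x $ coord (snd p))"
    by (intro L2_component L2) auto
qed

lemma orthonormal_basis_component_approximation:
  assumes U: "orthonormal_basis L2 U I" and g: "square_integrable lborel g" and "\<epsilon> > 0"
  obtains F where "finite F" "F \<subseteq> I"
    "L2_inner lborel g g - \<epsilon> < (\<Sum>p\<in>F \<times> UNIV. (L2_inner lborel g (\<lambda>x. U (fst p) x $ coord (snd p)))\<^sup>2)"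
proof -
  define e where "e = (\<lambda>p x. U (fst p) x $ coord (snd p))"
  have L2: "U k \<in> L2" if "k \<in> I" for k
    using U that by (simp add: orthonormal_basis_def basis_of_def)
  have e: "orthonormal_system lborel e (I \<times> UNIV)"
    unfolding e_def using U L2 by (intro orthonormal_system_components) (auto simp: orthonormal_basis_def)
  define f where "f x = vec2 (g x) 0" for x
  have f: "f \<in> L2"
    using g by (intro L2_of_components) (simp_all add: f_def)
  then obtain Q where "L2_expansion f Q U I"
    using U by (auto simp: orthonormal_basis_def basis_of_def)
  then obtain F where F: "finite F" "F \<subseteq> I"
    and close: "L2_norm (\<lambda>x. f x - (\<Sum>k\<in>F. Q k *v U k x)) < sqrt \<epsilon>"
    using \<open>\<epsilon> > 0\<close> unfolding L2_expansion_def by (meson order.refl real_sqrt_gt_zero)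
  define r where "r = (\<lambda>x. f x - (\<Sum>k\<in>F. Q k *v U k x))"
  have r: "r \<in> L2"
    unfolding r_def using f F L2 by (intro L2_diff L2_matrix_sum) auto
  have "L2_inner lborel g g - (\<Sum>p\<in>F \<times> UNIV. (L2_inner lborel g (e p))\<^sup>2) \<le>
      L2_inner lborel (\<lambda>x. g x - (\<Sum>p\<in>F \<times> UNIV. Q (fst p) $ 1 $ coord (snd p) * e p x))
        (\<lambda>x. g x - (\<Sum>p\<in>F \<times> UNIV. Q (fst p) $ 1 $ coord (snd p) * e p x))"
    using F by (intro Bessel_best_approximation[OF e _ _ g]) auto
  also have "\<dots> = L2_inner lborel (\<lambda>x. r x $ 1) (\<lambda>x. r x $ 1)"
    by (simp add: r_def f_def e_def matrix_sum_nth del: sum_component)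
  also have "\<dots> \<le> (L2_norm r)\<^sup>2"
    by (rule L2_inner_component_le_L2_norm[OF r])
  also have "\<dots> < \<epsilon>"
    using close \<open>\<epsilon> > 0\<close> L2_norm_less_iff_squared[of "sqrt \<epsilon>" r] by (simp flip: r_def)
  finally have "L2_inner lborel g g - \<epsilon> < (\<Sum>p\<in>F \<times> UNIV. (L2_inner lborel g (e p))\<^sup>2)"
    by simp
  with F show ?thesis
    unfolding e_def by (rule that)
qed

lemma parseval_system_components:
  assumes U: "orthonormal_basis L2 U I" and I: "countable I"
  shows "parseval_system lborel (\<lambda>p x. U (fst p) x $ coord (snd p)) (I \<times> UNIV)"
proof -
  have e: "orthonormal_system lborel (\<lambda>p x. U (fst p) x $ coord (snd p)) (I \<times> UNIV)"
    using U by (intro orthonormal_system_components) (auto simp: orthonormal_basis_def basis_of_def)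
  have "countable (I \<times> (UNIV :: bool set))"
    using I by simp
  moreover have "(\<integral>\<^sup>+p. ennreal ((L2_inner lborel g (\<lambda>x. U (fst p) x $ coord (snd p)))\<^sup>2)
      \<partial>count_space (I \<times> UNIV)) = ennreal (L2_inner lborel g g)" if g: "square_integrable lborel g" for g
  proof (rule Parseval_identity_from_approximation[OF _ e g])
    fix \<epsilon> :: real assume "\<epsilon> > 0"
    with U g obtain F where "finite F" "F \<subseteq> I"
      "L2_inner lborel g g - \<epsilon> < (\<Sum>p\<in>F \<times> UNIV. (L2_inner lborel g (\<lambda>x. U (fst p) x $ coord (snd p)))\<^sup>2)"
      by (rule orthonormal_basis_component_approximation)
    then show "\<exists>F. finite F \<and> F \<subseteq> I \<times> UNIV \<and>
        L2_inner lborel g g - \<epsilon> < (\<Sum>p\<in>F. (L2_inner lborel g (\<lambda>x. U (fst p) x $ coord (snd p)))\<^sup>2)"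
      by (intro exI[of _ "F \<times> UNIV"]) auto
  qed (use I in simp)
  ultimately show ?thesis
    using e by (simp add: parseval_system_def)
qed

locale weighted_components =
  fixes U :: "'i \<Rightarrow> 'a::euclidean_space \<Rightarrow> real^2" and c :: "'i \<Rightarrow> real"
    and E :: "'i \<times> bool \<Rightarrow> 'a \<Rightarrow> real" and I :: "'i set"
  assumes weight_pos: "\<And>t. t \<in> I \<Longrightarrow> c t > 0"
    and components: "\<And>t a x. t \<in> I \<Longrightarrow> U t x $ coord a = c t * E (t, a) x"
    and parseval_E: "parseval_system lborel E (I \<times> UNIV)"
begin

lemma component_nth: "t \<in> I \<Longrightarrow> U t x $ i = c t * E (t, i = 1) x"
  using components[where a = "i = 1"] by simp

lemma orthonormal_E: "orthonormal_system lborel E (I \<times> UNIV)"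
  using parseval_E by (simp add: parseval_system_def)

lemma square_integrable_E: "p \<in> I \<times> UNIV \<Longrightarrow> square_integrable lborel (E p)"
  using orthonormal_E by (auto simp: orthonormal_system_def)

lemma L2_inner_E: "p \<in> I \<times> UNIV \<Longrightarrow> q \<in> I \<times> UNIV \<Longrightarrow>
    L2_inner lborel (E p) (E q) = (if p = q then 1 else 0)"
  using orthonormal_E unfolding orthonormal_system_def by blast

lemma U_in_L2: "t \<in> I \<Longrightarrow> U t \<in> L2"
  by (intro L2_of_components) (simp_all add: component_nth square_integrable_cmult square_integrable_E)

lemma orthogonal_family_U: "orthogonal_family U I"
proof -
  have star: "star_prod (U t) (U s) $ i $ j = c t * c s * L2_inner lborel (E (t, i = 1)) (E (s, j = 1))"
    if "t \<in> I" "s \<in> I" for t s i j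
    using that by (simp add: star_prod_nth component_nth L2_inner_cmult_left L2_inner_cmult_right)
  show ?thesis
    unfolding orthogonal_family_def
  proof (intro conjI ballI impI)
    fix t s assume "t \<in> I" "s \<in> I" "t \<noteq> s"
    then show "star_prod (U t) (U s) = 0"
      by (simp add: vec_eq_iff star L2_inner_E)
  next
    fix t assume "t \<in> I"
    then have "star_prod (U t) (U t) = (c t * c t) *\<^sub>R mat 1"
      by (auto simp: vec_eq_iff star L2_inner_E mat_1_nth forall_2)
    with weight_pos[OF \<open>t \<in> I\<close>] show "\<exists>r>0. star_prod (U t) (U t) = r *\<^sub>R mat 1"
      by (intro exI[of _ "c t * c t"]) simp
  qed
qed

lemma partial_sum_nth:
  assumes "F \<subseteq> I"
  shows "(\<Sum>k\<in>F. Q k *v U k x) $ i = (\<Sum>p\<in>F \<times> UNIV. (Q (fst p) $ i $ coord (snd p) * c (fst p)) * E p x)"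
  unfolding matrix_sum_nth using assms
  by (intro sum.cong refl) (auto simp: components mult.assoc)

lemma L2_partial_sum: "finite F \<Longrightarrow> F \<subseteq> I \<Longrightarrow> (\<lambda>x. \<Sum>k\<in>F. Q k *v U k x) \<in> L2"
  by (intro L2_matrix_sum U_in_L2) auto

lemma L2_inner_partial_sum_E:
  assumes F: "finite F" "F \<subseteq> I" and t: "t \<in> F"
  shows "L2_inner lborel (\<lambda>x. (\<Sum>k\<in>F. Q k *v U k x) $ i) (E (t, b)) = c t * Q t $ i $ coord b"
proof -
  have E_F: "square_integrable lborel (E p)" if "p \<in> F \<times> UNIV" for p
    using that F(2) by (intro square_integrable_E) auto
  have E_F_t: "L2_inner lborel (E p) (E (t, b)) = (if p = (t, b) then 1 else 0)" if "p \<in> F \<times> UNIV" for p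
    using that F(2) t by (intro L2_inner_E) auto
  have "L2_inner lborel (\<lambda>x. (\<Sum>k\<in>F. Q k *v U k x) $ i) (E (t, b)) =
      (\<Sum>p\<in>F \<times> UNIV. (Q (fst p) $ i $ coord (snd p) * c (fst p)) * L2_inner lborel (E p) (E (t, b)))"
    unfolding partial_sum_nth[OF F(2)] using F E_F t
    by (simp add: L2_inner_sum_left square_integrable_cmult L2_inner_cmult_left)
  also have "\<dots> = (\<Sum>p\<in>F \<times> UNIV. if p = (t, b) then Q t $ i $ coord b * c t else 0)"
    by (intro sum.cong refl) (simp add: E_F_t)
  finally show ?thesis
    using F(1) t by simp
qed

lemma L2_inner_E_squared_le_L2_norm:
  assumes "r \<in> L2" "p \<in> I \<times> UNIV"
  shows "(L2_inner lborel (\<lambda>x. r x $ i) (E p))\<^sup>2 \<le> (L2_norm r)\<^sup>2"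
proof -
  have "(L2_inner lborel (\<lambda>x. r x $ i) (E p))\<^sup>2 \<le> L2_inner lborel (\<lambda>x. r x $ i) (\<lambda>x. r x $ i)"
    using Bessel_inequality[OF orthonormal_E, of "{p}"] assms L2_component[OF assms(1)] by simp
  also have "\<dots> \<le> (L2_norm r)\<^sup>2"
    by (rule L2_inner_component_le_L2_norm[OF assms(1)])
  finally show ?thesis .
qed

lemma L2_expansion_coefficient:
  assumes f: "f \<in> L2" and Q: "L2_expansion f Q U I" and t: "t \<in> I"
  shows "Q t $ i $ coord b = L2_inner lborel (\<lambda>x. f x $ i) (E (t, b)) / c t"
proof -
  define v where "v = L2_inner lborel (\<lambda>x. f x $ i) (E (t, b)) - c t * Q t $ i $ coord b"
  have "\<bar>v\<bar> \<le> \<epsilon>" if "\<epsilon> > 0" for \<epsilon>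
  proof -
    from Q[unfolded L2_expansion_def, rule_format, OF \<open>\<epsilon> > 0\<close>] obtain F0 where F0: "finite F0" "F0 \<subseteq> I"
      and close: "\<forall>F. finite F \<and> F0 \<subseteq> F \<and> F \<subseteq> I \<longrightarrow> L2_norm (\<lambda>x. f x - (\<Sum>k\<in>F. Q k *v U k x)) < \<epsilon>"
      by blast
    define F where "F = insert t F0"
    have F: "finite F" "F0 \<subseteq> F" "F \<subseteq> I" "t \<in> F"
      using F0 t by (auto simp: F_def)
    define r where "r = (\<lambda>x. f x - (\<Sum>k\<in>F. Q k *v U k x))"
    have S: "(\<lambda>x. \<Sum>k\<in>F. Q k *v U k x) \<in> L2"
      using F by (intro L2_partial_sum)
    have "L2_inner lborel (\<lambda>x. r x $ i) (E (t, b)) =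
        L2_inner lborel (\<lambda>x. f x $ i) (E (t, b)) - L2_inner lborel (\<lambda>x. (\<Sum>k\<in>F. Q k *v U k x) $ i) (E (t, b))"
      unfolding r_def vector_minus_component using t
      by (intro L2_inner_diff_left L2_component f S square_integrable_E) simp
    then have "v = L2_inner lborel (\<lambda>x. r x $ i) (E (t, b))"
      by (simp only: v_def L2_inner_partial_sum_E[OF F(1,3,4)])
    then have "\<bar>v\<bar>\<^sup>2 \<le> (L2_norm r)\<^sup>2"
      using L2_inner_E_squared_le_L2_norm[of r "(t, b)" i] L2_diff[OF f S] t by (simp add: r_def)
    also have "\<dots> < \<epsilon>\<^sup>2"
      using close F(1-3) L2_norm_less_iff_squared[OF \<open>\<epsilon> > 0\<close>] unfolding r_def by blast
    finally show ?thesis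
      using \<open>\<epsilon> > 0\<close> power2_less_imp_less[of "\<bar>v\<bar>" \<epsilon>] by simp
  qed
  then have "v = 0"
    by (rule dense_eq0_I)
  with weight_pos[OF t] show ?thesis
    by (simp add: v_def field_simps)
qed

lemma residual_component_energy_le:
  assumes f: "f \<in> L2" and F: "finite F" "F \<subseteq> I" and G: "G \<subseteq> F \<times> UNIV"
    and Q: "\<And>t i a. t \<in> I \<Longrightarrow> Q t $ i $ coord a = L2_inner lborel (\<lambda>x. f x $ i) (E (t, a)) / c t"
  shows "L2_inner lborel (\<lambda>x. (f x - (\<Sum>k\<in>F. Q k *v U k x)) $ i) (\<lambda>x. (f x - (\<Sum>k\<in>F. Q k *v U k x)) $ i) \<le>
    L2_inner lborel (\<lambda>x. f x $ i) (\<lambda>x. f x $ i) - (\<Sum>p\<in>G. (L2_inner lborel (\<lambda>x. f x $ i) (E p))\<^sup>2)"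
proof -
  have "Q t $ i $ coord a * c t = L2_inner lborel (\<lambda>x. f x $ i) (E (t, a))" if "t \<in> F" for t a
    using Q[of t] weight_pos[of t] that F(2) by auto
  then have "(f x - (\<Sum>k\<in>F. Q k *v U k x)) $ i =
      f x $ i - (\<Sum>p\<in>F \<times> UNIV. L2_inner lborel (\<lambda>x. f x $ i) (E p) * E p x)" for x
    unfolding vector_minus_component partial_sum_nth[OF F(2)] by (auto intro!: sum.cong)
  then have "L2_inner lborel (\<lambda>x. (f x - (\<Sum>k\<in>F. Q k *v U k x)) $ i) (\<lambda>x. (f x - (\<Sum>k\<in>F. Q k *v U k x)) $ i) =
      L2_inner lborel (\<lambda>x. f x $ i) (\<lambda>x. f x $ i) - (\<Sum>p\<in>F \<times> UNIV. (L2_inner lborel (\<lambda>x. f x $ i) (E p))\<^sup>2)"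
    using Bessel_identity[where F = "F \<times> UNIV" and c = "\<lambda>p. L2_inner lborel (\<lambda>x. f x $ i) (E p)",
        OF orthonormal_E _ _ L2_component[OF f, of i]] F
    by auto
  moreover have "(\<Sum>p\<in>G. (L2_inner lborel (\<lambda>x. f x $ i) (E p))\<^sup>2) \<le>
      (\<Sum>p\<in>F \<times> UNIV. (L2_inner lborel (\<lambda>x. f x $ i) (E p))\<^sup>2)"
    using F(1) G by (intro sum_mono2) auto
  ultimately show ?thesis
    by simp
qed

lemma L2_expansion_exists:
  assumes f: "f \<in> L2"
    and Q: "\<And>t i a. t \<in> I \<Longrightarrow> Q t $ i $ coord a = L2_inner lborel (\<lambda>x. f x $ i) (E (t, a)) / c t"
  shows "L2_expansion f Q U I"
  unfolding L2_expansion_def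
proof (intro allI impI)
  fix \<epsilon> :: real assume "\<epsilon> > 0"
  then have "\<epsilon>\<^sup>2 / 2 > 0"
    by simp
  have "\<exists>G. finite G \<and> G \<subseteq> I \<times> UNIV \<and>
      L2_inner lborel (\<lambda>x. f x $ i) (\<lambda>x. f x $ i) - \<epsilon>\<^sup>2 / 2 < (\<Sum>p\<in>G. (L2_inner lborel (\<lambda>x. f x $ i) (E p))\<^sup>2)"
    for i
    using \<open>\<epsilon>\<^sup>2 / 2 > 0\<close>
    by (rule parseval_system_approximation[OF parseval_E L2_component[OF f]]) blast
  then obtain G where G: "\<And>i. finite (G i) \<and> G i \<subseteq> I \<times> UNIV \<and>
      L2_inner lborel (\<lambda>x. f x $ i) (\<lambda>x. f x $ i) - \<epsilon>\<^sup>2 / 2 < (\<Sum>p\<in>G i. (L2_inner lborel (\<lambda>x. f x $ i) (E p))\<^sup>2)"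
    using choice[of "\<lambda>i G. finite G \<and> G \<subseteq> I \<times> UNIV \<and>
      L2_inner lborel (\<lambda>x. f x $ i) (\<lambda>x. f x $ i) - \<epsilon>\<^sup>2 / 2 < (\<Sum>p\<in>G. (L2_inner lborel (\<lambda>x. f x $ i) (E p))\<^sup>2)"]
    by blast
  define F0 where "F0 = fst ` (G 1 \<union> G 2)"
  show "\<exists>F0. finite F0 \<and> F0 \<subseteq> I \<and> (\<forall>F. finite F \<and> F0 \<subseteq> F \<and> F \<subseteq> I \<longrightarrow>
      L2_norm (\<lambda>x. f x - (\<Sum>k\<in>F. Q k *v U k x)) < \<epsilon>)"
  proof (intro exI conjI allI impI)
    show "finite F0" "F0 \<subseteq> I"
      using G[of 1] G[of 2] by (auto simp: F0_def)
    fix F assume F: "finite F \<and> F0 \<subseteq> F \<and> F \<subseteq> I"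
    define r where "r = (\<lambda>x. f x - (\<Sum>k\<in>F. Q k *v U k x))"
    have r: "r \<in> L2"
      unfolding r_def using F by (intro L2_diff f L2_partial_sum) auto
    have small: "L2_inner lborel (\<lambda>x. r x $ i) (\<lambda>x. r x $ i) < \<epsilon>\<^sup>2 / 2" for i
    proof -
      have "G i \<subseteq> F \<times> UNIV"
      proof
        fix p assume "p \<in> G i"
        then have "fst p \<in> F0"
          using exhaust_2[of i] unfolding F0_def by auto
        with F show "p \<in> F \<times> UNIV"
          by (cases p) auto
      qed
      then show ?thesis
        using G[of i] residual_component_energy_le[OF f _ _ _ Q, of F "G i" i] F by (simp add: r_def)
    qed
    have "(L2_norm r)\<^sup>2 < \<epsilon>\<^sup>2"
      using small[of 1] small[of 2] unfolding L2_norm_squared[OF r] by linarith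
    then show "L2_norm (\<lambda>x. f x - (\<Sum>k\<in>F. Q k *v U k x)) < \<epsilon>"
      using L2_norm_less_iff_squared[OF \<open>\<epsilon> > 0\<close>, of r] unfolding r_def by blast
  qed
qed

lemma orthogonal_basis_L2: "orthogonal_basis L2 U I"
proof -
  have "\<exists>Q. L2_expansion f Q U I \<and> (\<forall>Q'. L2_expansion f Q' U I \<longrightarrow> (\<forall>k\<in>I. Q' k = Q k))"
    if f: "f \<in> L2" for f
  proof -
    define Q where "Q t = (\<chi> i j. L2_inner lborel (\<lambda>x. f x $ i) (E (t, j = 1)) / c t :: real^2^2)" for t
    have Q_coeff: "Q t $ i $ coord a = L2_inner lborel (\<lambda>x. f x $ i) (E (t, a)) / c t" for t i a
      by (simp add: Q_def coord_def)
    have "Q' t = Q t" if "L2_expansion f Q' U I" "t \<in> I" for Q' t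
      unfolding vec_eq_iff
    proof (intro allI)
      fix i j :: 2
      show "Q' t $ i $ j = Q t $ i $ j"
        using L2_expansion_coefficient[OF f that, of i "j = 1"] Q_coeff[of t i "j = 1"] by simp
    qed
    with L2_expansion_exists[OF f Q_coeff] show ?thesis
      by blast
  qed
  then show ?thesis
    unfolding orthogonal_basis_def basis_of_def
    using orthogonal_family_U U_in_L2 by blast
qed

end

section \<open>Dyadic dilations and the one-dimensional wavelet system\<close>

definition dyadic :: "(real \<Rightarrow> real^2) \<Rightarrow> nat \<Rightarrow> int \<times> bool \<Rightarrow> real \<Rightarrow> real" where
  "dyadic u j q x = sqrt 2 ^ j * u (2 ^ j * x - of_int (fst q)) $ coord (snd q)"

definition wavelet_components ::
  "(real \<Rightarrow> real^2) \<Rightarrow> (real \<Rightarrow> real^2) \<Rightarrow> (int + nat \<times> int) \<times> bool \<Rightarrow> real \<Rightarrow> real" where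
  "wavelet_components \<phi> \<psi> p x = wavelet_system \<phi> \<psi> (fst p) x $ coord (snd p)"

lemma wavelet_components_simps:
  "wavelet_components \<phi> \<psi> (Inl k, a) = dyadic \<phi> 0 (k, a)"
  "wavelet_components \<phi> \<psi> (Inr (j, k), a) = dyadic \<psi> j (k, a)"
  by (auto simp: fun_eq_iff wavelet_components_def wavelet_system_def dyadic_def)

lemma parseval_system_wavelet_components:
  "vector_wavelet \<phi> \<psi> \<Longrightarrow> parseval_system lborel (wavelet_components \<phi> \<psi>) UNIV"
  using parseval_system_components[of "wavelet_system \<phi> \<psi>" UNIV]
  by (simp add: vector_wavelet_def wavelet_components_def[abs_def])

lemma nn_integral_split_wavelet_index:
  fixes F :: "(int + nat \<times> int) \<times> bool \<Rightarrow> ennreal"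
  shows "(\<integral>\<^sup>+p. F p \<partial>count_space UNIV) = (\<integral>\<^sup>+q. F (Inl (fst q), snd q) \<partial>count_space UNIV) +
    (\<integral>\<^sup>+i. (\<integral>\<^sup>+q. F (Inr (i, fst q), snd q) \<partial>count_space UNIV) \<partial>count_space UNIV)"
proof -
  have "(\<integral>\<^sup>+p. F p \<partial>count_space UNIV) = (\<integral>\<^sup>+w. (\<integral>\<^sup>+a. F (w, a) \<partial>count_space UNIV) \<partial>count_space UNIV)"
    by (rule nn_integral_count_space_prod)
  also have "\<dots> = (\<integral>\<^sup>+k. (\<integral>\<^sup>+a. F (Inl k, a) \<partial>count_space UNIV) \<partial>count_space UNIV) +
      (\<integral>\<^sup>+ik. (\<integral>\<^sup>+a. F (Inr ik, a) \<partial>count_space UNIV) \<partial>count_space UNIV)"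
    by (rule nn_integral_count_space_sum_type)
  also have "(\<integral>\<^sup>+ik. (\<integral>\<^sup>+a. F (Inr ik, a) \<partial>count_space UNIV) \<partial>count_space UNIV) =
      (\<integral>\<^sup>+i. (\<integral>\<^sup>+k. (\<integral>\<^sup>+a. F (Inr (i, k), a) \<partial>count_space UNIV) \<partial>count_space UNIV) \<partial>count_space UNIV)"
    by (rule nn_integral_count_space_prod[where f = "\<lambda>ik. (\<integral>\<^sup>+a. F (Inr ik, a) \<partial>count_space UNIV)"])
  finally show ?thesis
    by (simp add: nn_integral_count_space_prod[of "\<lambda>q. F (Inl (fst q), snd q)"]
        nn_integral_count_space_prod[of "\<lambda>q. F (Inr (_, fst q), snd q)"])
qed

lemma sqrt_2_power_squared: "sqrt 2 ^ j * sqrt 2 ^ j = (2::real) ^ j"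
  by (simp flip: power_mult_distrib)

lemma sqrt_2_power_cancel: "sqrt 2 ^ j * a * (sqrt 2 ^ j * b) / 2 ^ j = (a * b :: real)"
proof -
  have "sqrt 2 ^ j * a * (sqrt 2 ^ j * b) = (sqrt 2 ^ j * sqrt 2 ^ j) * (a * b)"
    by (simp only: mult_ac)
  also have "\<dots> = 2 ^ j * (a * b)"
    by (simp only: sqrt_2_power_squared)
  finally have eq: "sqrt 2 ^ j * a * (sqrt 2 ^ j * b) = 2 ^ j * (a * b)" .
  show ?thesis
    unfolding eq by simp
qed

lemma lborel_integral_dyadic_scale:
  fixes F :: "real \<Rightarrow> real"
  shows "(\<integral>x. F x \<partial>lborel) = (\<integral>x. F (x / 2 ^ j) / 2 ^ j \<partial>lborel)"
  using lborel_integral_real_affine[of "1 / 2 ^ j" F 0]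
  by (simp add: divide_inverse mult.commute)

lemma square_integrable_affine:
  fixes g :: "real \<Rightarrow> real"
  assumes g: "square_integrable lborel g" and "c \<noteq> 0"
  shows "square_integrable lborel (\<lambda>x. r * g (t + c * x))"
proof -
  have [measurable]: "g \<in> borel_measurable lborel"
    using g by (simp add: square_integrable_def)
  have "integrable lborel (\<lambda>x. (g (t + c * x))\<^sup>2)"
    using lborel_integrable_real_affine[of "\<lambda>x. (g x)\<^sup>2" c t] g \<open>c \<noteq> 0\<close>
    by (simp add: square_integrable_def)
  then show ?thesis
    by (simp add: square_integrable_def power_mult_distrib)
qed

definition stretch :: "nat \<Rightarrow> (real \<Rightarrow> real) \<Rightarrow> real \<Rightarrow> real" where
  "stretch j g x = g (x / 2 ^ j) / sqrt 2 ^ j"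

lemma square_integrable_stretch: "square_integrable lborel g \<Longrightarrow> square_integrable lborel (stretch j g)"
  using square_integrable_affine[of g "1 / 2 ^ j" "1 / sqrt 2 ^ j" 0]
  by (simp add: stretch_def[abs_def] divide_inverse mult.commute)

lemma L2_inner_stretch_dyadic:
  "L2_inner lborel g (dyadic v (j + d) q) = L2_inner lborel (stretch j g) (dyadic v d q)"
proof -
  have scale: "sqrt 2 ^ (j + d) / (2::real) ^ j = sqrt 2 ^ d / sqrt 2 ^ j"
    by (simp add: power_add flip: sqrt_2_power_squared)
  have "g (x / 2 ^ j) * dyadic v (j + d) q (x / 2 ^ j) / 2 ^ j = stretch j g x * dyadic v d q x" for x
  proof -
    have "(2::real) ^ (j + d) * (x / 2 ^ j) = 2 ^ d * x"
      by (simp add: power_add)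
    then have "g (x / 2 ^ j) * dyadic v (j + d) q (x / 2 ^ j) / 2 ^ j =
        g (x / 2 ^ j) * v (2 ^ d * x - of_int (fst q)) $ coord (snd q) * (sqrt 2 ^ (j + d) / 2 ^ j)"
      by (simp add: dyadic_def)
    then show ?thesis
      unfolding scale by (simp add: dyadic_def stretch_def)
  qed
  then show ?thesis
    unfolding L2_inner_def by (subst lborel_integral_dyadic_scale[of _ j]) simp
qed

lemma L2_inner_stretch_self: "L2_inner lborel (stretch j g) (stretch j g) = L2_inner lborel g g"
proof -
  have "g (x / 2 ^ j) * g (x / 2 ^ j) / 2 ^ j = stretch j g x * stretch j g x" for x
    by (simp add: stretch_def flip: sqrt_2_power_squared)
  then show ?thesis
    unfolding L2_inner_def by (subst (2) lborel_integral_dyadic_scale[of _ j]) simp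
qed

lemma stretch_dyadic: "stretch j (dyadic u j q) = dyadic u 0 q"
  by (simp add: fun_eq_iff stretch_def dyadic_def)

definition dyadic_energy :: "(real \<Rightarrow> real^2) \<Rightarrow> (real \<Rightarrow> real) \<Rightarrow> nat \<Rightarrow> ennreal" where
  "dyadic_energy u g j = (\<integral>\<^sup>+q. ennreal ((L2_inner lborel g (dyadic u j q))\<^sup>2) \<partial>count_space UNIV)"

locale parseval_wavelet =
  fixes \<phi> \<psi> :: "real \<Rightarrow> real^2"
  assumes parseval_components: "parseval_system lborel (wavelet_components \<phi> \<psi>) UNIV"
begin

lemma L2_inner_wavelet_components:
  "L2_inner lborel (wavelet_components \<phi> \<psi> p) (wavelet_components \<phi> \<psi> p') = (if p = p' then 1 else 0)"
  using parseval_components unfolding parseval_system_def orthonormal_system_def by blast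

lemma square_integrable_wavelet_components: "square_integrable lborel (wavelet_components \<phi> \<psi> p)"
  using parseval_components unfolding parseval_system_def orthonormal_system_def by blast

lemma square_integrable_dyadic_scaling: "square_integrable lborel (dyadic \<phi> j q)"
proof -
  have "square_integrable lborel (dyadic \<phi> 0 (0, snd q))"
    using square_integrable_wavelet_components[of "(Inl 0, snd q)"] by (simp add: wavelet_components_simps)
  then have "square_integrable lborel
      (\<lambda>x. sqrt 2 ^ j * dyadic \<phi> 0 (0, snd q) (- of_int (fst q) + 2 ^ j * x))"
    by (rule square_integrable_affine) simp
  then show ?thesis
    by (simp add: dyadic_def[abs_def])
qed

lemma square_integrable_dyadic_wavelet: "square_integrable lborel (dyadic \<psi> j q)"
  using square_integrable_wavelet_components[of "(Inr (j, fst q), snd q)"]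
  by (simp add: wavelet_components_simps)

lemma L2_inner_dyadic_scaling: "L2_inner lborel (dyadic \<phi> j q) (dyadic \<phi> j q') = (if q = q' then 1 else 0)"
  using L2_inner_stretch_dyadic[of "dyadic \<phi> j q" \<phi> j 0 q']
    L2_inner_wavelet_components[of "(Inl (fst q), snd q)" "(Inl (fst q'), snd q')"]
  by (simp add: stretch_dyadic wavelet_components_simps prod_eq_iff)

lemma L2_inner_dyadic_wavelet:
  "L2_inner lborel (dyadic \<psi> i q) (dyadic \<psi> i' q') = (if i = i' \<and> q = q' then 1 else 0)"
  using L2_inner_wavelet_components[of "(Inr (i, fst q), snd q)" "(Inr (i', fst q'), snd q')"]
  by (auto simp: wavelet_components_simps prod_eq_iff)

lemma L2_inner_dyadic_scaling_wavelet:
  assumes "j \<le> i"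
  shows "L2_inner lborel (dyadic \<phi> j q) (dyadic \<psi> i q') = 0"
proof -
  obtain d where i: "i = j + d"
    using assms le_Suc_ex by blast
  show ?thesis
    using L2_inner_stretch_dyadic[of "dyadic \<phi> j q" \<psi> j d q']
      L2_inner_wavelet_components[of "(Inl (fst q), snd q)" "(Inr (d, fst q'), snd q')"]
    by (simp add: i stretch_dyadic wavelet_components_simps)
qed

lemma energy_decomposition:
  assumes "square_integrable lborel g"
  shows "ennreal (L2_inner lborel g g) =
    dyadic_energy \<phi> g 0 + (\<integral>\<^sup>+i. dyadic_energy \<psi> g i \<partial>count_space UNIV)"
proof -
  have "ennreal (L2_inner lborel g g) =
      (\<integral>\<^sup>+p. ennreal ((L2_inner lborel g (wavelet_components \<phi> \<psi> p))\<^sup>2) \<partial>count_space UNIV)"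
    using parseval_components assms by (simp add: parseval_system_def)
  also have "\<dots> = dyadic_energy \<phi> g 0 + (\<integral>\<^sup>+i. dyadic_energy \<psi> g i \<partial>count_space UNIV)"
    unfolding dyadic_energy_def
    by (subst nn_integral_split_wavelet_index) (simp add: wavelet_components_simps)
  finally show ?thesis .
qed

text \<open>Stretching \<open>g\<close> by \<open>2 ^ j\<close> turns the energy decomposition of \<open>g\<close> into one over the
  \<open>dyadic \<phi> j q\<close> and the \<open>dyadic \<psi> i q\<close> with \<open>i \<ge> j\<close>; the common tail is finite and cancels.\<close>

lemma dyadic_energy_telescope:
  assumes g: "square_integrable lborel g"
  shows "dyadic_energy \<phi> g j = dyadic_energy \<phi> g 0 + (\<Sum>i<j. dyadic_energy \<psi> g i)"
proof -
  let ?tail = "\<integral>\<^sup>+i. dyadic_energy \<psi> g (i + j) \<partial>count_space UNIV"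
  have "dyadic_energy \<phi> (stretch j g) 0 = dyadic_energy \<phi> g j"
    using L2_inner_stretch_dyadic[of g \<phi> j 0] by (simp add: dyadic_energy_def)
  moreover have "dyadic_energy \<psi> (stretch j g) i = dyadic_energy \<psi> g (i + j)" for i
    using L2_inner_stretch_dyadic[of g \<psi> j i] by (simp add: dyadic_energy_def add.commute)
  ultimately have stretched: "ennreal (L2_inner lborel g g) = dyadic_energy \<phi> g j + ?tail"
    using energy_decomposition[OF square_integrable_stretch[OF g, of j]]
    by (simp add: L2_inner_stretch_self)
  have unstretched:
    "ennreal (L2_inner lborel g g) = dyadic_energy \<phi> g 0 + (\<Sum>i<j. dyadic_energy \<psi> g i) + ?tail"
    using energy_decomposition[OF g] nn_integral_count_space_nat_shift[of "dyadic_energy \<psi> g" j]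
    by (simp add: add.assoc)
  have "?tail \<le> ennreal (L2_inner lborel g g)"
    unfolding stretched by simp
  then have "?tail \<noteq> \<infinity>"
    using ennreal_less_top[of "L2_inner lborel g g"] by (auto simp: top_unique)
  with stretched unstretched show ?thesis
    by (metis add.commute ennreal_add_left_cancel)
qed

end

section \<open>The two-dimensional wavelet system\<close>

type_synonym tensor_wavelet_index =
  "(int \<times> bool) \<times> (int \<times> bool) + nat \<times> (int \<times> bool) \<times> (int \<times> bool) +
    nat \<times> (int \<times> bool) \<times> (int \<times> bool) + nat \<times> (int \<times> bool) \<times> (int \<times> bool)"

fun tensor_wavelet ::
  "(real \<Rightarrow> real^2) \<Rightarrow> (real \<Rightarrow> real^2) \<Rightarrow> tensor_wavelet_index \<Rightarrow> real \<times> real \<Rightarrow> real" where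
  "tensor_wavelet \<phi> \<psi> (Inl (q1, q2)) = tensor (dyadic \<phi> 0 q1) (dyadic \<phi> 0 q2)"
| "tensor_wavelet \<phi> \<psi> (Inr (Inl (j, q1, q2))) = tensor (dyadic \<phi> j q1) (dyadic \<psi> j q2)"
| "tensor_wavelet \<phi> \<psi> (Inr (Inr (Inl (j, q1, q2)))) = tensor (dyadic \<psi> j q1) (dyadic \<phi> j q2)"
| "tensor_wavelet \<phi> \<psi> (Inr (Inr (Inr (j, q1, q2)))) = tensor (dyadic \<psi> j q1) (dyadic \<psi> j q2)"

lemma tensor_wavelet_index_cases:
  fixes x :: tensor_wavelet_index
  obtains q1 q2 where "x = Inl (q1, q2)"
    | j q1 q2 where "x = Inr (Inl (j, q1, q2))"
    | j q1 q2 where "x = Inr (Inr (Inl (j, q1, q2)))"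
    | j q1 q2 where "x = Inr (Inr (Inr (j, q1, q2)))"
  by (metis sumE prod_cases3)

definition tensor_energy ::
  "(real \<times> real \<Rightarrow> real) \<Rightarrow> (real \<Rightarrow> real^2) \<Rightarrow> nat \<Rightarrow> (real \<Rightarrow> real^2) \<Rightarrow> nat \<Rightarrow> ennreal" where
  "tensor_energy h u j v l = (\<integral>\<^sup>+q1. \<integral>\<^sup>+q2.
     ennreal ((L2_inner (lborel \<Otimes>\<^sub>M lborel) h (tensor (dyadic u j q1) (dyadic v l q2)))\<^sup>2)
     \<partial>count_space UNIV \<partial>count_space UNIV)"

lemma nn_integral_split_tensor_wavelet_index:
  fixes F :: "tensor_wavelet_index \<Rightarrow> ennreal"
  shows "(\<integral>\<^sup>+x. F x \<partial>count_space UNIV) =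
    (\<integral>\<^sup>+q1. \<integral>\<^sup>+q2. F (Inl (q1, q2)) \<partial>count_space UNIV \<partial>count_space UNIV) +
    (\<integral>\<^sup>+j. \<integral>\<^sup>+q1. \<integral>\<^sup>+q2. F (Inr (Inl (j, q1, q2))) \<partial>count_space UNIV \<partial>count_space UNIV \<partial>count_space UNIV) +
    (\<integral>\<^sup>+j. \<integral>\<^sup>+q1. \<integral>\<^sup>+q2. F (Inr (Inr (Inl (j, q1, q2)))) \<partial>count_space UNIV \<partial>count_space UNIV \<partial>count_space UNIV) +
    (\<integral>\<^sup>+j. \<integral>\<^sup>+q1. \<integral>\<^sup>+q2. F (Inr (Inr (Inr (j, q1, q2)))) \<partial>count_space UNIV \<partial>count_space UNIV \<partial>count_space UNIV)"
  by (simp add: nn_integral_count_space_sum_type nn_integral_count_space_prod add.assoc)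

lemma tensor_energy_eq_contract_snd:
  assumes h: "square_integrable (lborel \<Otimes>\<^sub>M lborel) h"
    and u: "\<And>q. square_integrable lborel (dyadic u j q)"
    and v: "\<And>q. square_integrable lborel (dyadic v l q)"
  shows "tensor_energy h u j v l =
    (\<integral>\<^sup>+q2. dyadic_energy u (contract_snd h (dyadic v l q2)) j \<partial>count_space UNIV)"
  unfolding tensor_energy_def dyadic_energy_def
  by (subst nn_integral_count_space_swap) (simp add: L2_inner_tensor_contract_snd[OF h u v])

lemma tensor_energy_eq_contract_fst:
  assumes h: "square_integrable (lborel \<Otimes>\<^sub>M lborel) h"
    and u: "\<And>q. square_integrable lborel (dyadic u j q)"
    and v: "\<And>q. square_integrable lborel (dyadic v l q)"
  shows "tensor_energy h u j v l =
    (\<integral>\<^sup>+q1. dyadic_energy v (contract_fst h (dyadic u j q1)) l \<partial>count_space UNIV)"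
  unfolding tensor_energy_def dyadic_energy_def
  by (simp add: L2_inner_tensor_contract_fst[OF h u v])

lemma nn_integral_split_wavelet_index_pair:
  fixes G :: "(int + nat \<times> int) \<times> bool \<Rightarrow> (int + nat \<times> int) \<times> bool \<Rightarrow> ennreal"
  shows "(\<integral>\<^sup>+w1. \<integral>\<^sup>+w2. G w1 w2 \<partial>count_space UNIV \<partial>count_space UNIV) =
    (\<integral>\<^sup>+q1. \<integral>\<^sup>+q2. G (Inl (fst q1), snd q1) (Inl (fst q2), snd q2) \<partial>count_space UNIV \<partial>count_space UNIV) +
    (\<integral>\<^sup>+l. \<integral>\<^sup>+q1. \<integral>\<^sup>+q2. G (Inl (fst q1), snd q1) (Inr (l, fst q2), snd q2)
      \<partial>count_space UNIV \<partial>count_space UNIV \<partial>count_space UNIV) +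
    (\<integral>\<^sup>+i. \<integral>\<^sup>+q1. \<integral>\<^sup>+q2. G (Inr (i, fst q1), snd q1) (Inl (fst q2), snd q2)
      \<partial>count_space UNIV \<partial>count_space UNIV \<partial>count_space UNIV) +
    (\<integral>\<^sup>+i. \<integral>\<^sup>+l. \<integral>\<^sup>+q1. \<integral>\<^sup>+q2. G (Inr (i, fst q1), snd q1) (Inr (l, fst q2), snd q2)
      \<partial>count_space UNIV \<partial>count_space UNIV \<partial>count_space UNIV \<partial>count_space UNIV)"
    (is "_ = ?rhs")
proof -
  define X where "X w1 = (\<integral>\<^sup>+q2. G w1 (Inl (fst q2), snd q2) \<partial>count_space UNIV)" for w1
  define Y where "Y w1 = (\<integral>\<^sup>+l. \<integral>\<^sup>+q2. G w1 (Inr (l, fst q2), snd q2) \<partial>count_space UNIV \<partial>count_space UNIV)"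
    for w1
  have swap: "(\<integral>\<^sup>+q1. \<integral>\<^sup>+l. H q1 l \<partial>count_space UNIV \<partial>count_space UNIV) =
      (\<integral>\<^sup>+l. \<integral>\<^sup>+q1. H q1 l \<partial>count_space UNIV \<partial>count_space UNIV)" for H :: "int \<times> bool \<Rightarrow> nat \<Rightarrow> ennreal"
    by (rule nn_integral_count_space_swap)
  have "(\<integral>\<^sup>+w1. \<integral>\<^sup>+w2. G w1 w2 \<partial>count_space UNIV \<partial>count_space UNIV) =
      (\<integral>\<^sup>+w1. X w1 + Y w1 \<partial>count_space UNIV)"
    unfolding X_def Y_def by (intro nn_integral_cong) (rule nn_integral_split_wavelet_index)
  also have "\<dots> = (\<integral>\<^sup>+w1. X w1 \<partial>count_space UNIV) + (\<integral>\<^sup>+w1. Y w1 \<partial>count_space UNIV)"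
    by (rule nn_integral_count_space_add)
  also have "\<dots> = ?rhs"
    unfolding nn_integral_split_wavelet_index[of X] nn_integral_split_wavelet_index[of Y]
    unfolding X_def Y_def swap by (simp only: add_ac)
  finally show ?thesis .
qed

context parseval_wavelet
begin

lemma L2_inner_dyadic_wavelet_scaling: "j \<le> i \<Longrightarrow> L2_inner lborel (dyadic \<psi> i q') (dyadic \<phi> j q) = 0"
  using L2_inner_dyadic_scaling_wavelet by (simp add: L2_inner_commute)

lemma L2_inner_dyadic_mixed:
  "L2_inner lborel (dyadic \<phi> j q1) (dyadic \<psi> i r1) * L2_inner lborel (dyadic \<psi> j q2) (dyadic \<phi> i r2) = 0"
  by (cases "j \<le> i") (simp_all add: L2_inner_dyadic_scaling_wavelet L2_inner_dyadic_wavelet_scaling)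

lemma L2_inner_dyadic_mixed':
  "L2_inner lborel (dyadic \<psi> j q1) (dyadic \<phi> i r1) * L2_inner lborel (dyadic \<phi> j q2) (dyadic \<psi> i r2) = 0"
  using L2_inner_dyadic_mixed[of i r1 j q1 r2 q2] by (simp add: L2_inner_commute mult.commute)

lemma square_integrable_tensor_wavelet:
  "square_integrable (lborel \<Otimes>\<^sub>M lborel) (tensor_wavelet \<phi> \<psi> x)"
  by (cases x rule: tensor_wavelet_index_cases)
    (simp_all add: square_integrable_tensor square_integrable_dyadic_scaling
      square_integrable_dyadic_wavelet)

lemma orthonormal_system_tensor_wavelet:
  "orthonormal_system (lborel \<Otimes>\<^sub>M lborel) (tensor_wavelet \<phi> \<psi>) UNIV"
  unfolding orthonormal_system_def
proof (intro conjI ballI square_integrable_tensor_wavelet)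
  fix x y :: tensor_wavelet_index
  show "L2_inner (lborel \<Otimes>\<^sub>M lborel) (tensor_wavelet \<phi> \<psi> x) (tensor_wavelet \<phi> \<psi> y) =
      (if x = y then 1 else 0)"
    by (cases x rule: tensor_wavelet_index_cases; cases y rule: tensor_wavelet_index_cases)
      (auto simp: L2_inner_tensor square_integrable_dyadic_scaling
        square_integrable_dyadic_wavelet L2_inner_dyadic_scaling
        L2_inner_dyadic_wavelet L2_inner_dyadic_scaling_wavelet
        L2_inner_dyadic_wavelet_scaling L2_inner_dyadic_mixed L2_inner_dyadic_mixed')
qed

lemma tensor_energy_telescope_fst:
  assumes h: "square_integrable (lborel \<Otimes>\<^sub>M lborel) h" and v: "\<And>q. square_integrable lborel (dyadic v l q)"
  shows "tensor_energy h \<phi> j v l = tensor_energy h \<phi> 0 v l + (\<Sum>i<j. tensor_energy h \<psi> i v l)"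
proof -
  let ?g = "\<lambda>q. contract_snd h (dyadic v l q)"
  have "tensor_energy h \<phi> j v l = (\<integral>\<^sup>+q. dyadic_energy \<phi> (?g q) j \<partial>count_space UNIV)"
    by (rule tensor_energy_eq_contract_snd[OF h square_integrable_dyadic_scaling v])
  also have "\<dots> = (\<integral>\<^sup>+q. dyadic_energy \<phi> (?g q) 0 + (\<Sum>i<j. dyadic_energy \<psi> (?g q) i) \<partial>count_space UNIV)"
    by (intro nn_integral_cong dyadic_energy_telescope square_integrable_contract_snd[OF h v])
  also have "\<dots> = tensor_energy h \<phi> 0 v l + (\<Sum>i<j. tensor_energy h \<psi> i v l)"
    by (simp add: nn_integral_count_space_add nn_integral_count_space_sum
        tensor_energy_eq_contract_snd[OF h square_integrable_dyadic_scaling v]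
        tensor_energy_eq_contract_snd[OF h square_integrable_dyadic_wavelet v])
  finally show ?thesis .
qed

lemma tensor_energy_telescope_snd:
  assumes h: "square_integrable (lborel \<Otimes>\<^sub>M lborel) h" and u: "\<And>q. square_integrable lborel (dyadic u l q)"
  shows "tensor_energy h u l \<phi> j = tensor_energy h u l \<phi> 0 + (\<Sum>i<j. tensor_energy h u l \<psi> i)"
proof -
  let ?g = "\<lambda>q. contract_fst h (dyadic u l q)"
  have "tensor_energy h u l \<phi> j = (\<integral>\<^sup>+q. dyadic_energy \<phi> (?g q) j \<partial>count_space UNIV)"
    by (rule tensor_energy_eq_contract_fst[OF h u square_integrable_dyadic_scaling])
  also have "\<dots> = (\<integral>\<^sup>+q. dyadic_energy \<phi> (?g q) 0 + (\<Sum>i<j. dyadic_energy \<psi> (?g q) i) \<partial>count_space UNIV)"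
    by (intro nn_integral_cong dyadic_energy_telescope square_integrable_contract_fst[OF h u])
  also have "\<dots> = tensor_energy h u l \<phi> 0 + (\<Sum>i<j. tensor_energy h u l \<psi> i)"
    by (simp add: nn_integral_count_space_add nn_integral_count_space_sum
        tensor_energy_eq_contract_fst[OF h u square_integrable_dyadic_scaling]
        tensor_energy_eq_contract_fst[OF h u square_integrable_dyadic_wavelet])
  finally show ?thesis .
qed

lemma Parseval_identity_tensor_wavelet:
  assumes h: "square_integrable (lborel \<Otimes>\<^sub>M lborel) h"
  shows "(\<integral>\<^sup>+x. ennreal ((L2_inner (lborel \<Otimes>\<^sub>M lborel) h (tensor_wavelet \<phi> \<psi> x))\<^sup>2) \<partial>count_space UNIV) =
    ennreal (L2_inner (lborel \<Otimes>\<^sub>M lborel) h h)"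
proof -
  let ?E = "tensor_energy h" and ?e = "wavelet_components \<phi> \<psi>"
  have "ennreal (L2_inner (lborel \<Otimes>\<^sub>M lborel) h h) = (\<integral>\<^sup>+w2. \<integral>\<^sup>+w1.
      ennreal ((L2_inner (lborel \<Otimes>\<^sub>M lborel) h (tensor (?e w1) (?e w2)))\<^sup>2) \<partial>count_space UNIV \<partial>count_space UNIV)"
    by (rule tensor_Parseval_identity[OF parseval_components parseval_components h, symmetric])
  also have "\<dots> = (\<integral>\<^sup>+w1. \<integral>\<^sup>+w2.
      ennreal ((L2_inner (lborel \<Otimes>\<^sub>M lborel) h (tensor (?e w1) (?e w2)))\<^sup>2) \<partial>count_space UNIV \<partial>count_space UNIV)"
    by (rule nn_integral_count_space_swap[symmetric])
  also have "\<dots> = ?E \<phi> 0 \<phi> 0 + (\<integral>\<^sup>+l. ?E \<phi> 0 \<psi> l \<partial>count_space UNIV) + (\<integral>\<^sup>+i. ?E \<psi> i \<phi> 0 \<partial>count_space UNIV) +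
      (\<integral>\<^sup>+i. \<integral>\<^sup>+l. ?E \<psi> i \<psi> l \<partial>count_space UNIV \<partial>count_space UNIV)"
    unfolding nn_integral_split_wavelet_index_pair by (simp add: wavelet_components_simps tensor_energy_def)
  also have "\<dots> = ?E \<phi> 0 \<phi> 0 + (\<integral>\<^sup>+j. ?E \<phi> 0 \<psi> j + (\<Sum>i<j. ?E \<psi> i \<psi> j) \<partial>count_space UNIV) +
      (\<integral>\<^sup>+j. ?E \<psi> j \<phi> 0 + (\<Sum>i<j. ?E \<psi> j \<psi> i) \<partial>count_space UNIV) + (\<integral>\<^sup>+j. ?E \<psi> j \<psi> j \<partial>count_space UNIV)"
    by (simp add: nn_integral_count_space_nat_diagonal_split nn_integral_count_space_add add_ac)
  also have "\<dots> = ?E \<phi> 0 \<phi> 0 + (\<integral>\<^sup>+j. ?E \<phi> j \<psi> j \<partial>count_space UNIV) +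
      (\<integral>\<^sup>+j. ?E \<psi> j \<phi> j \<partial>count_space UNIV) + (\<integral>\<^sup>+j. ?E \<psi> j \<psi> j \<partial>count_space UNIV)"
    by (simp only: tensor_energy_telescope_fst[OF h square_integrable_dyadic_wavelet, symmetric]
        tensor_energy_telescope_snd[OF h square_integrable_dyadic_wavelet, symmetric])
  also have "\<dots> = (\<integral>\<^sup>+x. ennreal ((L2_inner (lborel \<Otimes>\<^sub>M lborel) h (tensor_wavelet \<phi> \<psi> x))\<^sup>2) \<partial>count_space UNIV)"
    unfolding nn_integral_split_tensor_wavelet_index by (simp add: tensor_energy_def)
  finally show ?thesis ..
qed

lemma parseval_system_tensor_wavelet: "parseval_system (lborel \<Otimes>\<^sub>M lborel) (tensor_wavelet \<phi> \<psi>) UNIV"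
  using orthonormal_system_tensor_wavelet Parseval_identity_tensor_wavelet
  by (simp add: parseval_system_def)

end

text \<open>The two-dimensional \<open>Psi\<close>'s carry no normalising factor, whereas \<open>dyadic\<close> includes
  \<open>sqrt 2 ^ j\<close> in each variable; the component \<open>a\<close> of a two-dimensional function is the tensor
  product of the components \<open>a\<close> and \<open>a\<close>, or \<open>a\<close> and \<open>\<not> a\<close> for the swapped families, of the
  one-dimensional factors.\<close>

fun tensor_weight :: "tidx \<Rightarrow> real" where
  "tensor_weight (PhiIdx i k) = 1"
| "tensor_weight (PsiIdx i j k) = 1 / 2 ^ j"

fun tensor_component :: "tidx \<times> bool \<Rightarrow> tensor_wavelet_index" where
  "tensor_component (PhiIdx i k, a) = Inl ((fst k, a), (snd k, if i = 1 then a else \<not> a))"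
| "tensor_component (PsiIdx i j k, a) =
     (let q = ((fst k, a), (snd k, if odd i then a else \<not> a)) in
      if i \<le> 2 then Inr (Inl (j, q)) else if i \<le> 4 then Inr (Inr (Inl (j, q))) else Inr (Inr (Inr (j, q))))"

fun tensor_component_index :: "tensor_wavelet_index \<Rightarrow> tidx \<times> bool" where
  "tensor_component_index (Inl ((k1, a), (k2, b))) = (PhiIdx (if a = b then 1 else 2) (k1, k2), a)"
| "tensor_component_index (Inr (Inl (j, (k1, a), (k2, b)))) =
     (PsiIdx (if a = b then 1 else 2) j (k1, k2), a)"
| "tensor_component_index (Inr (Inr (Inl (j, (k1, a), (k2, b))))) =
     (PsiIdx (if a = b then 3 else 4) j (k1, k2), a)"
| "tensor_component_index (Inr (Inr (Inr (j, (k1, a), (k2, b))))) =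
     (PsiIdx (if a = b then 5 else 6) j (k1, k2), a)"

lemma tensor_index_cases:
  assumes "t \<in> tensor_index"
  obtains k where "t = PhiIdx 1 k" | k where "t = PhiIdx 2 k"
    | j k where "t = PsiIdx 1 j k" | j k where "t = PsiIdx 2 j k"
    | j k where "t = PsiIdx 3 j k" | j k where "t = PsiIdx 4 j k"
    | j k where "t = PsiIdx 5 j k" | j k where "t = PsiIdx 6 j k"
proof -
  have "i \<in> {1..6} \<Longrightarrow> i = 1 \<or> i = 2 \<or> i = 3 \<or> i = 4 \<or> i = 5 \<or> i = 6" for i :: nat
    by auto
  with assms that show ?thesis
    unfolding tensor_index_def by blast
qed

lemma bij_tensor_component: "bij_betw tensor_component (tensor_index \<times> UNIV) UNIV"
proof (rule bij_betw_byWitness[where f' = tensor_component_index])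
  show "\<forall>p\<in>tensor_index \<times> UNIV. tensor_component_index (tensor_component p) = p"
    by (auto elim: tensor_index_cases simp: Let_def)
  show "\<forall>x\<in>UNIV. tensor_component (tensor_component_index x) = x"
  proof
    fix x
    show "tensor_component (tensor_component_index x) = x"
      by (cases x rule: tensor_wavelet_index_cases) (auto simp: Let_def)
  qed
  show "tensor_component_index ` UNIV \<subseteq> tensor_index \<times> UNIV"
  proof (rule image_subsetI)
    fix x
    show "tensor_component_index x \<in> tensor_index \<times> UNIV"
      by (cases x rule: tensor_wavelet_index_cases) (auto simp: tensor_index_def)
  qed
qed simp

lemma tensor_family_component:
  assumes "t \<in> tensor_index"
  shows "tensor_family \<phi> \<psi> t p $ coord a = tensor_weight t * tensor_wavelet \<phi> \<psi> (tensor_component (t, a)) p"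
proof (cases p)
  case (Pair x y)
  from assms show ?thesis
    by (cases rule: tensor_index_cases; cases a)
      (simp_all add: Pair Phi1_def Phi2_def Psi1_def Psi2_def Psi3_def Psi4_def Psi5_def Psi6_def
        tens_def dyadic_def vec2_nth_coord coord_def sqrt_2_power_cancel)
qed

theorem corollary2:
  fixes \<phi> \<psi> :: "real \<Rightarrow> real^2"
  assumes "vector_wavelet \<phi> \<psi>"
  shows "orthogonal_basis (L2 :: (real \<times> real \<Rightarrow> real^2) set) (tensor_family \<phi> \<psi>) tensor_index"
proof -
  interpret parseval_wavelet \<phi> \<psi>
    using parseval_system_wavelet_components[OF assms] by (rule parseval_wavelet.intro)
  have "parseval_system lborel (tensor_wavelet \<phi> \<psi>) UNIV"
    using parseval_system_tensor_wavelet by (simp add: lborel_prod)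
  then have parseval:
    "parseval_system lborel (\<lambda>p. tensor_wavelet \<phi> \<psi> (tensor_component p)) (tensor_index \<times> UNIV)"
    by (rule parseval_system_reindex[OF bij_tensor_component])
  have weight: "tensor_weight t > 0" if "t \<in> tensor_index" for t
    using that by (cases rule: tensor_index_cases) auto
  interpret weighted_components "tensor_family \<phi> \<psi>" tensor_weight
      "\<lambda>p. tensor_wavelet \<phi> \<psi> (tensor_component p)" tensor_index
    by (rule weighted_components.intro[OF weight tensor_family_component parseval])
  show ?thesis
    by (rule orthogonal_basis_L2)
qed

end
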